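(* Let $a,b\ge1$ be coprime integers with $a\le b$, and write $$P_{a/b}(u,v,w)=\sum_{k\ge0}S_k(v,w)\,u^k=\sum_{k\ge0}R_k(u,w)\,v^k=\sum_{k\ge0}T_k(u,v)\,w^k$$ with polynomials $S_k,R_k,T_k$. Then: (1) $S_0(v,w)=v^b(v+w)^{a-1}$; (2) $R_0(u,w)=u^a(u+w)^{b-1}$; (3) if $b\ge 3$, $R_1(u,w)=(3a-1)\,u^a(u+w)^{b-2}+(b-2a)\,u^{a+1}(u+w)^{b-3}$; (4) $T_0(u,v)=(u+v)^{a+b-1}$; (5) if $a+b\ge 3$, $T_1(u,v)=(a-1)(u+v)^{a+b-2}+(b-a)\,u\,(u+v)^{a+b-3}$; (6) if $a+b\ge5$, $T_2(u,v)=\frac{(a-1)(a-2)}{2}(u+v)^{a+b-3}+\big[a(b-a)-a\big]u(u+v)^{a+b-4}+\frac12\big[(b-a)^2+5a-3b\big]u^2(u+v)^{a+b-5}$.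
   Context: Markov polynomials. Let $x,y,z$ be indeterminates. Consider the set consisting of all rationals $\rho\in[0,1]$, each written in lowest terms $\rho=a/b$ with integers $a\ge 0$, $b\ge 1$, together with the formal symbol $1/0$. Define Laurent polynomials $M_\rho(x,y,z)$ recursively by $M_{1/0}=y$, $M_{0/1}=x$, $M_{1/1}=\frac{x^2+y^2}{z}$, and: whenever $a/b$, $c/d$ are in this set with $|ad-bc|=1$ and $(a+2c)/(b+2d)\in[0,1]$, then $M_{\frac{a+2c}{b+2d}}=\big(M_{c/d}^2+M_{\frac{a+c}{b+d}}^2\big)/M_{a/b}$. This determines $M_\rho$ for every rational $\rho\in[0,1]$. Numerator. For coprime $1\le a\le b$, $P_{a/b}(u,v,w)$ denotes the homogeneous polynomial of degree $a+b-1$ such that $M_{a/b}(x,y,z)=P_{a/b}(x^2,y^2,z^2)/(x^{a-1}y^{b-1}z^{a+b-1})$; its existence is known. *)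

theory Defs
  imports "HOL-Computational_Algebra.Polynomial" "HOL-Computational_Algebra.Fraction_Field"
begin

text \<open>Trivariate integer polynomials in u, v, w are represented as nested univariate
  polynomials: type int poly poly poly, where u is the innermost variable,
  v the middle one and w the outermost one.  The same ring, with variables
  renamed x, y, z, is used for the Markov Laurent polynomials, which are taken
  in its field of fractions.\<close>

type_synonym tri = "int poly poly poly"

definition varU :: tri where "varU = [:[:[:0, 1:]:]:]"
definition varV :: tri where "varV = [:[:0, 1:]:]"
definition varW :: tri where "varW = [:0, 1:]"

definition ev3 :: "tri \<Rightarrow> 'a::comm_ring_1 \<Rightarrow> 'a \<Rightarrow> 'a \<Rightarrow> 'a" where
  "ev3 p u v w =
     poly (map_poly (\<lambda>q. poly (map_poly (\<lambda>r. poly (map_poly of_int r) u) q) v) p) w"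

type_synonym K = "tri fract"

definition Xk :: K where "Xk = Fract varU 1"
definition Yk :: K where "Yk = Fract varV 1"
definition Zk :: K where "Zk = Fract varW 1"

text \<open>Index set: rationals in [0,1] in lowest terms a/b (pairs (a,b)), plus the
  formal symbol 1/0, represented by the pair (1,0).\<close>
definition markov_index :: "(nat \<times> nat) set" where
  "markov_index = {(a, b). coprime a b \<and> (a \<le> b \<or> (a, b) = (1, 0))}"

definition markov_rules :: "(nat \<times> nat \<Rightarrow> K) \<Rightarrow> bool" where
  "markov_rules M \<longleftrightarrow>
     M (1, 0) = Yk \<and> M (0, 1) = Xk \<and> M (1, 1) = (Xk^2 + Yk^2) / Zk \<and>
     (\<forall>a b c d. (a, b) \<in> markov_index \<and> (c, d) \<in> markov_index \<and>
        \<bar>int a * int d - int b * int c\<bar> = 1 \<and> a + 2 * c \<le> b + 2 * d \<longrightarrow>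
        M (a + 2 * c, b + 2 * d) = (M (c, d)^2 + M (a + c, b + d)^2) / M (a, b))"

definition markov :: "nat \<times> nat \<Rightarrow> K" where
  "markov = (THE M. markov_rules M \<and> (\<forall>\<rho>. \<rho> \<notin> markov_index \<longrightarrow> M \<rho> = 0))"

definition markovP :: "nat \<Rightarrow> nat \<Rightarrow> tri" where
  "markovP a b = (THE p. markov (a, b) =
      ev3 p (Xk^2) (Yk^2) (Zk^2) / (Xk^(a - 1) * Yk^(b - 1) * Zk^(a + b - 1)))"

text \<open>Coefficient extraction, the result being viewed again as a trivariate polynomial
  (not depending on the extracted variable).\<close>
definition coeffU :: "tri \<Rightarrow> nat \<Rightarrow> tri" where
  "coeffU p k = map_poly (map_poly (\<lambda>r. [:coeff r k:])) p"
definition coeffV :: "tri \<Rightarrow> nat \<Rightarrow> tri" where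
  "coeffV p k = map_poly (\<lambda>q. [:coeff q k:]) p"
definition coeffW :: "tri \<Rightarrow> nat \<Rightarrow> tri" where
  "coeffW p k = [:coeff p k:]"

end

theory Submission
  imports Defs
begin

text \<open>The Markov polynomials are organised along the Stern-Brocot tree of [0,1]: a node carries
  two Farey neighbours L < R together with the numerators of L, R and of their mediant M.
  In terms of numerators the recursion reads P' = (u + v + w) P_L P_M - m_L P_R with
  m_{a/b} = u^a v^b w^(a+b); this is Vieta jumping on the polynomial Markov relation
  m_R P_L^2 + P_M^2 + m_L P_R^2 = (u + v + w) P_L P_M P_R, so all numerators are polynomials.
  Reading the recursion modulo w^3, modulo v^2 and at u = 0, each of the six coefficient formulas
  is seen to be multiplicative in (a, b) and is therefore propagated down the tree; the correction
  term m_L P_R only matters next to 0/1 and 1/1, where it is computed directly. Since every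
  reduced fraction in (0,1) is the mediant of exactly one node, the tree also shows that the
  Markov family is unique, so its numerators are exactly the ones built here.\<close>

section \<open>Polynomial homomorphisms and coefficient extraction\<close>

lemma map_poly_add:
  assumes "f 0 = 0" "\<And>a b. f (a + b) = f a + f b"
  shows "map_poly f (p + q) = map_poly f p + map_poly f q"
  by (intro poly_eqI) (simp add: coeff_map_poly assms)

lemma map_poly_diff:
  assumes "f 0 = 0" "\<And>a b. f (a - b) = f a - f b"
  shows "map_poly f (p - q) = map_poly f p - map_poly f q"
  by (intro poly_eqI) (simp add: coeff_map_poly assms)

lemma map_poly_mult:
  fixes f :: "'a::comm_ring_1 \<Rightarrow> 'b::comm_ring_1"
  assumes f0: "f 0 = 0" and fadd: "\<And>a b. f (a + b) = f a + f b"
    and fmult: "\<And>a b. f (a * b) = f a * f b"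
  shows "map_poly f (p * q) = map_poly f p * map_poly f q"
proof (induction p)
  case (pCons a p)
  have "map_poly f (pCons a p * q) = map_poly f (smult a q + pCons 0 (p * q))" by simp
  also have "\<dots> = map_poly f (pCons a p) * map_poly f q"
    by (simp add: map_poly_add[where f=f, OF f0 fadd] map_poly_smult[where f=f, OF f0 fmult]
        map_poly_pCons[where f=f, OF f0] pCons.IH f0)
  finally show ?case .
qed simp

lemma map_poly_power:
  fixes f :: "'a::comm_ring_1 \<Rightarrow> 'b::comm_ring_1"
  assumes "f 0 = 0" "\<And>a b. f (a + b) = f a + f b" "\<And>a b. f (a * b) = f a * f b" "f 1 = 1"
  shows "map_poly f (p ^ n) = map_poly f p ^ n"
  by (induction n) (simp_all add: map_poly_mult[where f=f, OF assms(1-3)] assms(4))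

lemma hom_poly_map_poly:
  fixes \<phi> :: "'a::comm_ring_1 \<Rightarrow> 'b::comm_ring_1" and g :: "'c::zero \<Rightarrow> 'a"
  assumes \<phi>0: "\<phi> 0 = 0" and \<phi>add: "\<And>a b. \<phi> (a + b) = \<phi> a + \<phi> b"
    and \<phi>mult: "\<And>a b. \<phi> (a * b) = \<phi> a * \<phi> b" and g0: "g 0 = 0"
  shows "\<phi> (poly (map_poly g p) w) = poly (map_poly (\<phi> \<circ> g) p) (\<phi> w)"
proof (induction p)
  case (pCons a p)
  have "(\<lambda>a. \<phi> (g a)) 0 = 0" using g0 \<phi>0 by simp
  with pCons.IH show ?case
    by (simp add: map_poly_pCons[where f=g, OF g0] map_poly_pCons[where f="\<lambda>a. \<phi> (g a)"]
        \<phi>add \<phi>mult)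
qed (simp add: \<phi>0)

lemma poly_map_poly_hom:
  fixes g :: "'a::comm_ring_1 \<Rightarrow> 'b::comm_ring_1"
  assumes g0: "g 0 = 0" and gadd: "\<And>a b. g (a + b) = g a + g b"
    and gmult: "\<And>a b. g (a * b) = g a * g b" and g1: "g 1 = 1"
  shows "poly (map_poly g 0) w = 0"
    "poly (map_poly g (p + q)) w = poly (map_poly g p) w + poly (map_poly g q) w"
    "poly (map_poly g (p * q)) w = poly (map_poly g p) w * poly (map_poly g q) w"
    "poly (map_poly g 1) w = 1"
  by (simp_all add: map_poly_add[where f=g, OF g0 gadd] map_poly_mult[where f=g, OF g0 gadd gmult]
      g1)

text \<open>The coefficients extracted in the theorem all live in int poly poly, read as polynomials in
  an inner variable var_in and an outer variable var_out: T_k(u,v) is coeff P k (u inner,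
  v outer), R_k(u,w) is coeff_v k P (u inner, w outer) and S_0(v,w) is at_u0 P (v inner,
  w outer).\<close>

definition var_in :: "int poly poly" where "var_in = [:[:0, 1:]:]"
definition var_out :: "int poly poly" where "var_out = [:0, 1:]"

abbreviation var_sum :: "int poly poly" where "var_sum \<equiv> var_in + var_out"

definition coeff_v :: "nat \<Rightarrow> tri \<Rightarrow> int poly poly" where
  "coeff_v k p = map_poly (\<lambda>q. coeff q k) p"

definition at_u0 :: "tri \<Rightarrow> int poly poly" where
  "at_u0 p = map_poly (map_poly (\<lambda>r. coeff r 0)) p"

lemma var_sum_nonzero: "var_sum \<noteq> 0"
proof
  assume "var_sum = 0"
  then have "coeff var_sum 1 = 0" by simp
  then show False by (simp add: var_in_def var_out_def)
qed

lemma coeff_mult_Suc_0: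
  "coeff (p * q) (Suc 0) = coeff p 0 * coeff q (Suc 0) + coeff p (Suc 0) * coeff q 0"
  by (simp add: coeff_mult)

lemma coeff_v_add: "coeff_v k (p + q) = coeff_v k p + coeff_v k q"
  unfolding coeff_v_def by (rule map_poly_add) simp_all

lemma coeff_v_diff: "coeff_v k (p - q) = coeff_v k p - coeff_v k q"
  unfolding coeff_v_def by (rule map_poly_diff) simp_all

lemma coeff_v_0_mult: "coeff_v 0 (p * q) = coeff_v 0 p * coeff_v 0 q"
  unfolding coeff_v_def by (rule map_poly_mult) (simp_all add: coeff_mult_0)

lemma coeff_v_1_mult:
  "coeff_v (Suc 0) (p * q) = coeff_v 0 p * coeff_v (Suc 0) q + coeff_v (Suc 0) p * coeff_v 0 q"
proof (rule poly_eqI)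
  fix n
  have "coeff (coeff_v (Suc 0) (p * q)) n = (\<Sum>i\<le>n. coeff (coeff p i * coeff q (n - i)) 1)"
    by (simp add: coeff_v_def coeff_map_poly coeff_mult coeff_sum)
  also have "\<dots> = (\<Sum>i\<le>n. coeff (coeff p i) 0 * coeff (coeff q (n - i)) 1)
      + (\<Sum>i\<le>n. coeff (coeff p i) 1 * coeff (coeff q (n - i)) 0)"
    by (simp add: coeff_mult_Suc_0 sum.distrib)
  also have "\<dots> = coeff (coeff_v 0 p * coeff_v (Suc 0) q + coeff_v (Suc 0) p * coeff_v 0 q) n"
    by (simp add: coeff_mult coeff_v_def coeff_map_poly)
  finally show "coeff (coeff_v (Suc 0) (p * q)) n
      = coeff (coeff_v 0 p * coeff_v (Suc 0) q + coeff_v (Suc 0) p * coeff_v 0 q) n" .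
qed

lemma coeff_v_one: "coeff_v 0 1 = 1" "coeff_v (Suc 0) 1 = 0"
  by (simp_all add: coeff_v_def one_pCons map_poly_pCons)

lemma coeff_v_0_power: "coeff_v 0 (p ^ n) = coeff_v 0 p ^ n"
  by (induction n) (simp_all add: coeff_v_0_mult coeff_v_one)

lemma coeff_v_1_power:
  "coeff_v (Suc 0) (p ^ n) = of_nat n * coeff_v 0 p ^ (n - 1) * coeff_v (Suc 0) p"
proof (induction n)
  case (Suc n)
  have "coeff_v (Suc 0) (p ^ Suc n)
      = coeff_v 0 p * coeff_v (Suc 0) (p ^ n) + coeff_v (Suc 0) p * coeff_v 0 p ^ n"
    by (simp only: power_Suc coeff_v_1_mult coeff_v_0_power)
  also have "\<dots> = of_nat (Suc n) * coeff_v 0 p ^ n * coeff_v (Suc 0) p"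
    unfolding Suc.IH by (cases n) (simp_all add: algebra_simps)
  finally show ?case by simp
qed (simp add: coeff_v_one)

lemma coeff_v_vars:
  "coeff_v 0 varU = var_in" "coeff_v (Suc 0) varU = 0"
  "coeff_v 0 varV = 0" "coeff_v (Suc 0) varV = 1"
  "coeff_v 0 varW = var_out" "coeff_v (Suc 0) varW = 0"
  by (simp_all add: coeff_v_def varU_def varV_def varW_def var_in_def var_out_def
      one_pCons map_poly_pCons)

lemma at_u0_add: "at_u0 (p + q) = at_u0 p + at_u0 q"
  unfolding at_u0_def by (rule map_poly_add) (simp_all add: map_poly_add)

lemma at_u0_diff: "at_u0 (p - q) = at_u0 p - at_u0 q"
  unfolding at_u0_def by (rule map_poly_diff) (simp_all add: map_poly_diff)

lemma at_u0_mult: "at_u0 (p * q) = at_u0 p * at_u0 q"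
  unfolding at_u0_def
  by (rule map_poly_mult) (simp_all add: map_poly_add map_poly_mult coeff_mult_0)

lemma at_u0_vars: "at_u0 varU = 0" "at_u0 varV = var_in" "at_u0 varW = var_out" "at_u0 1 = 1"
  by (simp_all add: at_u0_def varU_def varV_def varW_def var_in_def var_out_def
      one_pCons map_poly_pCons)

lemma at_u0_power: "at_u0 (p ^ n) = at_u0 p ^ n"
  by (induction n) (simp_all add: at_u0_mult at_u0_vars)

section \<open>Coefficient shapes\<close>

definition T1_factor :: "'a::comm_ring_1 \<Rightarrow> 'a \<Rightarrow> nat \<Rightarrow> nat \<Rightarrow> 'a" where
  "T1_factor x t a b = (of_nat a - 1) * t + (of_nat b - of_nat a) * x"

definition T2_factor :: "'a::comm_ring_1 \<Rightarrow> 'a \<Rightarrow> nat \<Rightarrow> nat \<Rightarrow> 'a" where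
  "T2_factor x t a b = (of_nat a - 1) * (of_nat a - 2) * t\<^sup>2
     + 2 * (of_nat a * (of_nat b - of_nat a) - of_nat a) * x * t
     + ((of_nat b - of_nat a)\<^sup>2 + 5 * of_nat a - 3 * of_nat b) * x\<^sup>2"

definition R1_factor :: "'a::comm_ring_1 \<Rightarrow> 'a \<Rightarrow> nat \<Rightarrow> nat \<Rightarrow> 'a" where
  "R1_factor x t a b = (3 * of_nat a - 1) * t + (of_nat b - 2 * of_nat a) * x"

text \<open>The six coefficient formulas of the theorem, in two variables x (inner) and y (outer),
  multiplied by a power of x + y so that no exponent is a truncated difference; the second
  order one is doubled to clear the halves.\<close>

definition T0_shape :: "'a::comm_ring_1 \<Rightarrow> 'a \<Rightarrow> nat \<Rightarrow> nat \<Rightarrow> 'a \<Rightarrow> bool" where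
  "T0_shape x y a b c \<longleftrightarrow> (x + y) * c = (x + y) ^ (a + b)"

definition T1_shape :: "'a::comm_ring_1 \<Rightarrow> 'a \<Rightarrow> nat \<Rightarrow> nat \<Rightarrow> 'a \<Rightarrow> bool" where
  "T1_shape x y a b c \<longleftrightarrow> (x + y) ^ 3 * c = (x + y) ^ (a + b) * T1_factor x (x + y) a b"

definition T2_shape :: "'a::comm_ring_1 \<Rightarrow> 'a \<Rightarrow> nat \<Rightarrow> nat \<Rightarrow> 'a \<Rightarrow> bool" where
  "T2_shape x y a b c \<longleftrightarrow> 2 * (x + y) ^ 5 * c = (x + y) ^ (a + b) * T2_factor x (x + y) a b"

definition R0_shape :: "'a::comm_ring_1 \<Rightarrow> 'a \<Rightarrow> nat \<Rightarrow> nat \<Rightarrow> 'a \<Rightarrow> bool" where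
  "R0_shape x y a b c \<longleftrightarrow> (x + y) * c = x ^ a * (x + y) ^ b"

definition R1_shape :: "'a::comm_ring_1 \<Rightarrow> 'a \<Rightarrow> nat \<Rightarrow> nat \<Rightarrow> 'a \<Rightarrow> bool" where
  "R1_shape x y a b c \<longleftrightarrow> (x + y) ^ 3 * c = x ^ a * (x + y) ^ b * R1_factor x (x + y) a b"

definition S0_shape :: "'a::comm_ring_1 \<Rightarrow> 'a \<Rightarrow> nat \<Rightarrow> nat \<Rightarrow> 'a \<Rightarrow> bool" where
  "S0_shape x y a b c \<longleftrightarrow> (x + y) * c = x ^ b * (x + y) ^ a"

lemma T0_shape_mult:
  assumes "T0_shape x y a b c" "T0_shape x y a' b' c'"
  shows "T0_shape x y (a + a') (b + b') ((x + y) * c * c')"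
proof -
  define t where "t = x + y"
  have "t * (t * c * c') = (t * c) * (t * c')" by (simp add: mult_ac)
  also have "\<dots> = t ^ (a + b) * t ^ (a' + b')" using assms by (simp add: T0_shape_def t_def)
  also have "\<dots> = t ^ (a + a' + (b + b'))" by (simp add: power_add[symmetric] add_ac)
  finally show ?thesis by (simp add: T0_shape_def t_def)
qed

lemma R0_shape_mult:
  assumes "R0_shape x y a b c" "R0_shape x y a' b' c'"
  shows "R0_shape x y (a + a') (b + b') ((x + y) * c * c')"
proof -
  define t where "t = x + y"
  have "t * (t * c * c') = (t * c) * (t * c')" by (simp add: mult_ac)
  also have "\<dots> = x ^ a * t ^ b * (x ^ a' * t ^ b')" using assms by (simp add: R0_shape_def t_def)
  also have "\<dots> = x ^ (a + a') * t ^ (b + b')" by (simp add: power_add mult_ac)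
  finally show ?thesis by (simp add: R0_shape_def t_def)
qed

lemma S0_shape_mult:
  assumes "S0_shape x y a b c" "S0_shape x y a' b' c'"
  shows "S0_shape x y (a + a') (b + b') ((x + y) * c * c')"
proof -
  define t where "t = x + y"
  have "t * (t * c * c') = (t * c) * (t * c')" by (simp add: mult_ac)
  also have "\<dots> = x ^ b * t ^ a * (x ^ b' * t ^ a')" using assms by (simp add: S0_shape_def t_def)
  also have "\<dots> = x ^ (b + b') * t ^ (a + a')" by (simp add: power_add mult_ac)
  finally show ?thesis by (simp add: S0_shape_def t_def)
qed

lemma T1_shape_mult:
  fixes x y :: "'a::idom"
  assumes nz: "x + y \<noteq> 0"
    and A0: "T0_shape x y a b c0" and A1: "T1_shape x y a b c1"
    and B0: "T0_shape x y a' b' d0" and B1: "T1_shape x y a' b' d1"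
  shows "T1_shape x y (a + a') (b + b') ((x + y) * (c0 * d1 + c1 * d0) + c0 * d0)"
proof -
  define t where "t = x + y"
  define A where "A = t ^ (a + b)"
  define B where "B = t ^ (a' + b')"
  have h: "t * c0 = A" "t * d0 = B" "t ^ 3 * c1 = A * T1_factor x t a b"
    "t ^ 3 * d1 = B * T1_factor x t a' b'"
    using A0 A1 B0 B1 by (simp_all add: T0_shape_def T1_shape_def t_def A_def B_def)
  have "t * (t ^ 3 * (t * (c0 * d1 + c1 * d0) + c0 * d0))
      = (t * c0) * (t ^ 3 * d1) * t + (t ^ 3 * c1) * (t * d0) * t + (t * c0) * (t * d0) * t\<^sup>2"
    by algebra
  also have "\<dots> = t * (A * B * (T1_factor x t a' b' + T1_factor x t a b + t))"
    unfolding h by algebra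
  moreover have "T1_factor x t a' b' + T1_factor x t a b + t = T1_factor x t (a + a') (b + b')"
    by (simp add: T1_factor_def algebra_simps)
  moreover have "A * B = t ^ (a + a' + (b + b'))"
    by (simp add: A_def B_def power_add[symmetric] add_ac)
  moreover have "t \<noteq> 0" using nz by (simp add: t_def)
  ultimately show ?thesis by (simp add: T1_shape_def t_def)
qed

lemma T2_shape_mult:
  fixes x y :: "'a::idom"
  assumes nz: "x + y \<noteq> 0"
    and A0: "T0_shape x y a b c0" and A1: "T1_shape x y a b c1" and A2: "T2_shape x y a b c2"
    and B0: "T0_shape x y a' b' d0" and B1: "T1_shape x y a' b' d1" and B2: "T2_shape x y a' b' d2"
  shows "T2_shape x y (a + a') (b + b')
    ((x + y) * (c0 * d2 + c1 * d1 + c2 * d0) + (c0 * d1 + c1 * d0))"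
proof -
  define t where "t = x + y"
  define A where "A = t ^ (a + b)"
  define B where "B = t ^ (a' + b')"
  define F where "F = T2_factor x t a' b' + 2 * T1_factor x t a b * T1_factor x t a' b'
    + T2_factor x t a b + 2 * t * T1_factor x t a' b' + 2 * t * T1_factor x t a b"
  have h: "t * c0 = A" "t * d0 = B" "t ^ 3 * c1 = A * T1_factor x t a b"
    "t ^ 3 * d1 = B * T1_factor x t a' b'" "2 * t ^ 5 * c2 = A * T2_factor x t a b"
    "2 * t ^ 5 * d2 = B * T2_factor x t a' b'"
    using A0 A1 A2 B0 B1 B2
    by (simp_all add: T0_shape_def T1_shape_def T2_shape_def t_def A_def B_def)
  have "t ^ 4 * (2 * t ^ 5 * (t * (c0 * d2 + c1 * d1 + c2 * d0) + (c0 * d1 + c1 * d0)))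
      = (t * c0) * (2 * t ^ 5 * d2) * t ^ 4 + 2 * (t ^ 3 * c1) * (t ^ 3 * d1) * t ^ 4
        + (2 * t ^ 5 * c2) * (t * d0) * t ^ 4 + 2 * (t * c0) * (t ^ 3 * d1) * t ^ 5
        + 2 * (t ^ 3 * c1) * (t * d0) * t ^ 5"
    by algebra
  also have "\<dots> = t ^ 4 * (A * B * F)"
    unfolding h F_def by algebra
  moreover have "F = T2_factor x t (a + a') (b + b')"
    by (simp add: F_def T1_factor_def T2_factor_def algebra_simps power2_eq_square)
  moreover have "A * B = t ^ (a + a' + (b + b'))"
    by (simp add: A_def B_def power_add[symmetric] add_ac)
  moreover have "t \<noteq> 0" using nz by (simp add: t_def)
  ultimately show ?thesis by (simp add: T2_shape_def t_def)
qed

lemma R1_shape_mult: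
  fixes x y :: "'a::idom"
  assumes nz: "x + y \<noteq> 0"
    and A0: "R0_shape x y a b c0" and A1: "R1_shape x y a b c1"
    and B0: "R0_shape x y a' b' d0" and B1: "R1_shape x y a' b' d1"
  shows "R1_shape x y (a + a') (b + b') (c0 * d0 + (x + y) * (c0 * d1 + c1 * d0))"
proof -
  define t where "t = x + y"
  define A where "A = x ^ a * t ^ b"
  define B where "B = x ^ a' * t ^ b'"
  have h: "t * c0 = A" "t * d0 = B" "t ^ 3 * c1 = A * R1_factor x t a b"
    "t ^ 3 * d1 = B * R1_factor x t a' b'"
    using A0 A1 B0 B1 by (simp_all add: R0_shape_def R1_shape_def t_def A_def B_def)
  have "t * (t ^ 3 * (c0 * d0 + t * (c0 * d1 + c1 * d0)))
      = (t * c0) * (t * d0) * t\<^sup>2 + (t * c0) * (t ^ 3 * d1) * t + (t ^ 3 * c1) * (t * d0) * t"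
    by algebra
  also have "\<dots> = t * (A * B * (t + R1_factor x t a' b' + R1_factor x t a b))"
    unfolding h by algebra
  moreover have "t + R1_factor x t a' b' + R1_factor x t a b = R1_factor x t (a + a') (b + b')"
    by (simp add: R1_factor_def algebra_simps)
  moreover have "A * B = x ^ (a + a') * t ^ (b + b')"
    by (simp add: A_def B_def power_add mult_ac)
  moreover have "t \<noteq> 0" using nz by (simp add: t_def)
  ultimately show ?thesis by (simp add: R1_shape_def t_def)
qed

text \<open>When the left parent is 0/1 or 1/1, the correction term of the recursion reaches the
  tracked coefficients and the left parent lacks the higher shapes, so these steps are computed
  separately.\<close>

lemma T1_shape_left_01:
  fixes x y :: "'a::idom"
  assumes nz: "x + y \<noteq> 0"
    and B0: "T0_shape x y 1 (r + 1) d0" and B1: "T1_shape x y 1 (r + 1) d1"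
    and C0: "T0_shape x y 1 r e0"
  shows "T1_shape x y 1 (r + 2) ((x + y) * d1 + d0 - y * e0)"
proof -
  define t where "t = x + y"
  have y: "y = t - x" by (simp add: t_def)
  define B where "B = t ^ (r + 1)"
  have h: "t * d0 = t * B" "t ^ 3 * d1 = t * B * T1_factor x t 1 (r + 1)" "t * e0 = B"
    using B0 B1 C0 by (simp_all add: T0_shape_def T1_shape_def t_def B_def)
  have "t * (t ^ 3 * (t * d1 + d0 - y * e0))
      = t\<^sup>2 * (t ^ 3 * d1) + t ^ 3 * (t * d0) - y * t ^ 3 * (t * e0)"
    by algebra
  also have "\<dots> = t ^ 3 * B * (T1_factor x t 1 (r + 1) + t - y)"
    unfolding h by algebra
  also have "\<dots> = t * (t ^ (1 + (r + 2)) * T1_factor x t 1 (r + 2))"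
    by (simp add: B_def y T1_factor_def algebra_simps power_add power2_eq_square power3_eq_cube)
  finally show ?thesis using nz by (simp add: T1_shape_def t_def)
qed

lemma T2_shape_left_01:
  fixes x y :: "'a::idom"
  assumes nz: "x + y \<noteq> 0"
    and B1: "T1_shape x y 1 (r + 1) d1" and B2: "T2_shape x y 1 (r + 1) d2"
    and C1: "T1_shape x y 1 r e1"
  shows "T2_shape x y 1 (r + 2) ((x + y) * d2 + d1 - y * e1)"
proof -
  define t where "t = x + y"
  have y: "y = t - x" by (simp add: t_def)
  define B where "B = t ^ (r + 1)"
  have h: "t ^ 3 * d1 = t * B * T1_factor x t 1 (r + 1)"
    "2 * t ^ 5 * d2 = t * B * T2_factor x t 1 (r + 1)" "t ^ 3 * e1 = B * T1_factor x t 1 r"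
    using B1 B2 C1 by (simp_all add: T1_shape_def T2_shape_def t_def B_def)
  have "t * (2 * t ^ 5 * (t * d2 + d1 - y * e1))
      = t\<^sup>2 * (2 * t ^ 5 * d2) + 2 * t ^ 3 * (t ^ 3 * d1) - 2 * y * t ^ 3 * (t ^ 3 * e1)"
    by algebra
  also have "\<dots> = t ^ 3 * B * (T2_factor x t 1 (r + 1) + 2 * t * T1_factor x t 1 (r + 1)
      - 2 * y * T1_factor x t 1 r)"
    unfolding h by algebra
  also have "\<dots> = t * (t ^ (1 + (r + 2)) * T2_factor x t 1 (r + 2))"
    by (simp add: B_def y T1_factor_def T2_factor_def algebra_simps power_add power2_eq_square
        power3_eq_cube)
  finally show ?thesis using nz by (simp add: T2_shape_def t_def)
qed

lemma R1_shape_left_01: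
  fixes x y :: "'a::idom"
  assumes nz: "x + y \<noteq> 0"
    and B0: "R0_shape x y 1 (r + 1) d0" and B1: "R1_shape x y 1 (r + 1) d1"
    and C0: "R0_shape x y 1 r e0"
  shows "R1_shape x y 1 (r + 2) (d0 + (x + y) * d1 - y * e0)"
proof -
  define t where "t = x + y"
  have y: "y = t - x" by (simp add: t_def)
  define B where "B = x * t ^ r"
  have h: "t * d0 = t * B" "t ^ 3 * d1 = t * B * R1_factor x t 1 (r + 1)" "t * e0 = B"
    using B0 B1 C0 by (simp_all add: R0_shape_def R1_shape_def t_def B_def mult_ac)
  have "t * (t ^ 3 * (d0 + t * d1 - y * e0))
      = t ^ 3 * (t * d0) + t\<^sup>2 * (t ^ 3 * d1) - y * t ^ 3 * (t * e0)"
    by algebra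
  also have "\<dots> = t ^ 3 * B * (t + R1_factor x t 1 (r + 1) - y)"
    unfolding h by algebra
  also have "\<dots> = t * (x ^ 1 * t ^ (r + 2) * R1_factor x t 1 (r + 2))"
    by (simp add: B_def y R1_factor_def algebra_simps power_add power2_eq_square power3_eq_cube)
  finally show ?thesis using nz by (simp add: R1_shape_def t_def)
qed

lemma S0_shape_left_01:
  fixes x y :: "'a::idom"
  assumes nz: "x + y \<noteq> 0" and B0: "S0_shape x y 1 (r + 1) d0" and C0: "S0_shape x y 1 r e0"
  shows "S0_shape x y 1 (r + 2) ((x + y) * d0 - x * y * e0)"
proof -
  define t where "t = x + y"
  have y: "y = t - x" by (simp add: t_def)
  have h: "t * d0 = x ^ (r + 1) * t" "t * e0 = x ^ r * t"
    using B0 C0 by (simp_all add: S0_shape_def t_def)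
  have "t * (t * (t * d0 - x * y * e0)) = t * (t * (t * d0)) - x * y * t * (t * e0)"
    by algebra
  also have "\<dots> = t * (x ^ (r + 2) * t)"
    unfolding h by (simp add: y algebra_simps)
  finally show ?thesis using nz by (simp add: S0_shape_def t_def)
qed

lemma T2_shape_left_11:
  fixes x y :: "'a::idom"
  assumes nz: "x + y \<noteq> 0"
    and B1: "T1_shape x y (l + 1) (l + 2) d1" and B2: "T2_shape x y (l + 1) (l + 2) d2"
    and C0: "T0_shape x y l (l + 1) e0"
  shows "T2_shape x y (l + 2) (l + 3) ((x + y) * ((x + y) * d2) + (x + y) * d1 - x * y * e0)"
proof -
  define t where "t = x + y"
  have y: "y = t - x" by (simp add: t_def)
  define B where "B = t ^ (l + (l + 1))"
  have h: "t ^ 3 * d1 = t ^ 2 * B * T1_factor x t (l + 1) (l + 2)"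
    "2 * t ^ 5 * d2 = t ^ 2 * B * T2_factor x t (l + 1) (l + 2)" "t * e0 = B"
    using B1 B2 C0 by (simp_all add: T0_shape_def T1_shape_def T2_shape_def t_def B_def
        power_add[symmetric] algebra_simps)
  have "t * (2 * t ^ 5 * (t * (t * d2) + t * d1 - x * y * e0))
      = t ^ 3 * (2 * t ^ 5 * d2) + 2 * t ^ 4 * (t ^ 3 * d1) - 2 * x * y * t ^ 5 * (t * e0)"
    by algebra
  also have "\<dots> = t ^ 5 * B * (T2_factor x t (l + 1) (l + 2) + 2 * t * T1_factor x t (l + 1) (l + 2)
      - 2 * x * y)"
    unfolding h by algebra
  also have "\<dots> = t * (t ^ 4 * B * T2_factor x t (l + 2) (l + 3))"
    by (simp add: y T1_factor_def T2_factor_def algebra_simps power2_eq_square eval_nat_numeral)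
  also have "t ^ 4 * B = t ^ (l + 2 + (l + 3))"
    unfolding B_def power_add[symmetric] by (simp add: algebra_simps)
  finally show ?thesis using nz by (simp add: T2_shape_def t_def)
qed

lemma R1_shape_left_11:
  fixes x y :: "'a::idom"
  assumes nz: "x + y \<noteq> 0"
    and B0: "R0_shape x y (l + 1) (l + 2) d0" and B1: "R1_shape x y (l + 1) (l + 2) d1"
    and C0: "R0_shape x y l (l + 1) e0"
  shows "R1_shape x y (l + 2) (l + 3) (x * d0 + (x + y) * (x * d1 + d0) - x * y\<^sup>2 * e0)"
proof -
  define t where "t = x + y"
  have y: "y = t - x" by (simp add: t_def)
  define B where "B = x ^ l * t ^ (l + 1)"
  have h: "t * d0 = x * t * B" "t ^ 3 * d1 = x * t * B * R1_factor x t (l + 1) (l + 2)"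
    "t * e0 = B"
    using B0 B1 C0 by (simp_all add: R0_shape_def R1_shape_def t_def B_def mult_ac)
  have "t * (t ^ 3 * (x * d0 + t * (x * d1 + d0) - x * y\<^sup>2 * e0))
      = x * t ^ 3 * (t * d0) + x * t\<^sup>2 * (t ^ 3 * d1) + t ^ 4 * (t * d0)
        - x * y\<^sup>2 * t ^ 3 * (t * e0)"
    by algebra
  also have "\<dots> = x * t ^ 3 * B * (x * t + x * R1_factor x t (l + 1) (l + 2) + t\<^sup>2 - y\<^sup>2)"
    unfolding h by algebra
  also have "\<dots> = t * (x ^ (l + 2) * t ^ (l + 3) * R1_factor x t (l + 2) (l + 3))"
    by (simp add: B_def y R1_factor_def algebra_simps power_add power2_eq_square power3_eq_cube)
  finally show ?thesis using nz by (simp add: R1_shape_def t_def)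
qed

section \<open>The numerator recursion\<close>

definition sum_uvw :: tri where "sum_uvw = varU + varV + varW"

definition uvw_monomial :: "nat \<times> nat \<Rightarrow> tri" where
  "uvw_monomial \<rho> = varU ^ fst \<rho> * varV ^ snd \<rho> * varW ^ (fst \<rho> + snd \<rho>)"

lemma uvw_monomial_add: "uvw_monomial (a + c, b + d) = uvw_monomial (a, b) * uvw_monomial (c, d)"
  by (simp add: uvw_monomial_def power_add algebra_simps)

lemma const_poly_power: "[:a:] ^ n = [:a ^ n:]"
  by (induction n) (simp_all add: one_pCons mult.commute)

lemma sum_uvw_pCons: "sum_uvw = pCons var_sum 1"
  by (simp add: sum_uvw_def varU_def varV_def varW_def var_in_def var_out_def one_pCons)

lemma coeff_sum_uvw_mult:
  "coeff (sum_uvw * X) 0 = var_sum * coeff X 0"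
  "coeff (sum_uvw * X) (Suc k) = var_sum * coeff X (Suc k) + coeff X k"
  by (simp_all add: sum_uvw_pCons)

lemma coeff_uvw_monomial_mult:
  "coeff (uvw_monomial \<rho> * C) k = (if k < fst \<rho> + snd \<rho> then 0
     else var_in ^ fst \<rho> * var_out ^ snd \<rho> * coeff C (k - (fst \<rho> + snd \<rho>)))"
proof -
  have "varU ^ fst \<rho> * varV ^ snd \<rho> = [:var_in ^ fst \<rho> * var_out ^ snd \<rho>:]"
    by (simp add: varU_def var_in_def varV_def var_out_def const_poly_power)
  moreover have "varW ^ n = monom 1 n" for n
    by (simp add: varW_def monom_altdef)
  ultimately have "uvw_monomial \<rho> * C
      = monom 1 (fst \<rho> + snd \<rho>) * smult (var_in ^ fst \<rho> * var_out ^ snd \<rho>) C"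
    by (simp add: uvw_monomial_def mult_ac)
  then show ?thesis by (simp add: coeff_monom_mult)
qed

lemma coeff_v_uvw_monomial:
  "coeff_v 0 (uvw_monomial \<rho>) = (if snd \<rho> = 0 then var_in ^ fst \<rho> * var_out ^ fst \<rho> else 0)"
  "coeff_v (Suc 0) (uvw_monomial \<rho>)
     = (if snd \<rho> = 1 then var_in ^ fst \<rho> * var_out ^ (fst \<rho> + 1) else 0)"
  by (simp_all add: uvw_monomial_def coeff_v_0_mult coeff_v_1_mult coeff_v_0_power
      coeff_v_1_power coeff_v_vars power_0_left)

lemma at_u0_uvw_monomial:
  "at_u0 (uvw_monomial \<rho>) = (if fst \<rho> = 0 then var_in ^ snd \<rho> * var_out ^ snd \<rho> else 0)"
  by (simp add: uvw_monomial_def at_u0_mult at_u0_power at_u0_vars)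

lemma coeff_v_sum_uvw: "coeff_v 0 sum_uvw = var_sum" "coeff_v (Suc 0) sum_uvw = 1"
  by (simp_all add: sum_uvw_def coeff_v_add coeff_v_vars)

lemma at_u0_sum_uvw: "at_u0 sum_uvw = var_sum"
  by (simp add: sum_uvw_def at_u0_add at_u0_vars)

lemma recursion_coeffs:
  assumes N: "N = sum_uvw * A * B - uvw_monomial \<rho> * C" and "snd \<rho> \<ge> 1"
  shows "coeff N 0 = var_sum * coeff A 0 * coeff B 0"
    and "coeff N (Suc 0) = var_sum * (coeff A 0 * coeff B (Suc 0) + coeff A (Suc 0) * coeff B 0)
           + coeff A 0 * coeff B 0
           - (if fst \<rho> + snd \<rho> = 1 then var_in ^ fst \<rho> * var_out ^ snd \<rho> * coeff C 0 else 0)"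
    and "coeff N 2 = var_sum * (coeff A 0 * coeff B 2 + coeff A (Suc 0) * coeff B (Suc 0)
             + coeff A 2 * coeff B 0)
           + (coeff A 0 * coeff B (Suc 0) + coeff A (Suc 0) * coeff B 0)
           - (if fst \<rho> + snd \<rho> = 1 then var_in ^ fst \<rho> * var_out ^ snd \<rho> * coeff C (Suc 0)
              else if fst \<rho> + snd \<rho> = 2 then var_in ^ fst \<rho> * var_out ^ snd \<rho> * coeff C 0
              else 0)"
    and "coeff_v 0 N = var_sum * coeff_v 0 A * coeff_v 0 B"
    and "coeff_v (Suc 0) N = coeff_v 0 A * coeff_v 0 B
           + var_sum * (coeff_v 0 A * coeff_v (Suc 0) B + coeff_v (Suc 0) A * coeff_v 0 B)
           - (if snd \<rho> = 1 then var_in ^ fst \<rho> * var_out ^ (fst \<rho> + snd \<rho>) * coeff_v 0 C else 0)"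
    and "at_u0 N = var_sum * at_u0 A * at_u0 B
           - (if fst \<rho> = 0 then var_in ^ snd \<rho> * var_out ^ snd \<rho> * at_u0 C else 0)"
proof -
  have AB: "sum_uvw * A * B = sum_uvw * (A * B)" by (simp add: mult_ac)
  show "coeff N 0 = var_sum * coeff A 0 * coeff B 0"
    using assms(2) unfolding N AB coeff_diff coeff_sum_uvw_mult coeff_uvw_monomial_mult
    by (simp add: coeff_mult_0 mult_ac)
  show "coeff N (Suc 0) = var_sum * (coeff A 0 * coeff B (Suc 0) + coeff A (Suc 0) * coeff B 0)
           + coeff A 0 * coeff B 0
           - (if fst \<rho> + snd \<rho> = 1 then var_in ^ fst \<rho> * var_out ^ snd \<rho> * coeff C 0 else 0)"
    using assms(2) unfolding N AB coeff_diff coeff_sum_uvw_mult coeff_uvw_monomial_mult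
    by (simp add: coeff_mult_0 coeff_mult_Suc_0)
  show "coeff N 2 = var_sum * (coeff A 0 * coeff B 2 + coeff A (Suc 0) * coeff B (Suc 0)
             + coeff A 2 * coeff B 0)
           + (coeff A 0 * coeff B (Suc 0) + coeff A (Suc 0) * coeff B 0)
           - (if fst \<rho> + snd \<rho> = 1 then var_in ^ fst \<rho> * var_out ^ snd \<rho> * coeff C (Suc 0)
              else if fst \<rho> + snd \<rho> = 2 then var_in ^ fst \<rho> * var_out ^ snd \<rho> * coeff C 0
              else 0)"
    using assms(2)
    unfolding N AB coeff_diff numeral_2_eq_2 coeff_sum_uvw_mult coeff_uvw_monomial_mult
    by (auto simp add: coeff_mult_0 coeff_mult_Suc_0 coeff_mult atMost_Suc)
  show "coeff_v 0 N = var_sum * coeff_v 0 A * coeff_v 0 B"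
    using assms(2) by (simp add: N coeff_v_diff coeff_v_0_mult coeff_v_sum_uvw coeff_v_uvw_monomial)
  show "coeff_v (Suc 0) N = coeff_v 0 A * coeff_v 0 B
           + var_sum * (coeff_v 0 A * coeff_v (Suc 0) B + coeff_v (Suc 0) A * coeff_v 0 B)
           - (if snd \<rho> = 1 then var_in ^ fst \<rho> * var_out ^ (fst \<rho> + snd \<rho>) * coeff_v 0 C else 0)"
    using assms(2) by (simp add: N coeff_v_diff coeff_v_0_mult coeff_v_1_mult coeff_v_sum_uvw
        coeff_v_uvw_monomial algebra_simps)
  show "at_u0 N = var_sum * at_u0 A * at_u0 B
           - (if fst \<rho> = 0 then var_in ^ snd \<rho> * var_out ^ snd \<rho> * at_u0 C else 0)"
    by (simp add: N at_u0_diff at_u0_mult at_u0_sum_uvw at_u0_uvw_monomial)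
qed

definition all_shapes :: "tri \<Rightarrow> nat \<Rightarrow> nat \<Rightarrow> bool" where
  "all_shapes P a b \<longleftrightarrow>
     T0_shape var_in var_out a b (coeff P 0) \<and> T1_shape var_in var_out a b (coeff P (Suc 0))
     \<and> T2_shape var_in var_out a b (coeff P 2) \<and> R0_shape var_in var_out a b (coeff_v 0 P)
     \<and> R1_shape var_in var_out a b (coeff_v (Suc 0) P) \<and> S0_shape var_in var_out a b (at_u0 P)"

text \<open>The numerators 1 of 0/1 and u + v of 1/1 are too short for the higher coefficient formulas
  and are kept explicitly.\<close>

definition shaped_numerator :: "tri \<Rightarrow> nat \<times> nat \<Rightarrow> bool" where
  "shaped_numerator P \<rho> \<longleftrightarrow> (\<rho> = (0, 1) \<and> P = 1) \<or> (\<rho> = (1, 1) \<and> P = varU + varV)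
     \<or> (2 \<le> snd \<rho> \<and> all_shapes P (fst \<rho>) (snd \<rho>))"

lemma coeff_varU_varV: "coeff varU 0 = var_in" "coeff varV 0 = var_out"
  "coeff varU (Suc k) = 0" "coeff varV (Suc k) = 0"
  by (simp_all add: varU_def var_in_def varV_def var_out_def)

lemma shaped_numerator_zeroth_order:
  assumes "shaped_numerator P (a, b)"
  shows "T0_shape var_in var_out a b (coeff P 0)" "R0_shape var_in var_out a b (coeff_v 0 P)"
  using assms
  by (auto simp: shaped_numerator_def all_shapes_def T0_shape_def R0_shape_def coeff_varU_varV
      coeff_v_add coeff_v_vars coeff_v_one)

lemma shaped_numerator_first_order:
  assumes "shaped_numerator P (a, b)" "(a, b) \<noteq> (0, 1)"
  shows "T1_shape var_in var_out a b (coeff P (Suc 0))" "S0_shape var_in var_out a b (at_u0 P)"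
  using assms
  by (auto simp: shaped_numerator_def all_shapes_def T1_shape_def T1_factor_def S0_shape_def
      coeff_varU_varV at_u0_add at_u0_vars)

lemma all_shapes_step_generic:
  assumes N: "N = sum_uvw * PX * PM - uvw_monomial (a, b) * PY"
    and X: "all_shapes PX a b" and M: "all_shapes PM a' b'" and "1 \<le> a" "2 \<le> b"
  shows "all_shapes N (a + a') (b + b')"
proof -
  note C = recursion_coeffs[OF N]
  show ?thesis
    using X M assms(4,5) var_sum_nonzero
    unfolding all_shapes_def
    by (simp add: C T0_shape_mult R0_shape_mult S0_shape_mult T1_shape_mult T2_shape_mult
        R1_shape_mult)
qed

lemma all_shapes_step_left_01:
  assumes N: "N = sum_uvw * 1 * PM - uvw_monomial (0, 1) * PY"
    and Y: "shaped_numerator PY (1, r)" and M: "all_shapes PM 1 (r + 1)"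
  shows "all_shapes N 1 (r + 2)"
proof -
  note C = recursion_coeffs[OF N]
  have X: "T0_shape var_in var_out 0 1 (coeff 1 0)" "R0_shape var_in var_out 0 1 (coeff_v 0 1)"
    by (rule shaped_numerator_zeroth_order, simp add: shaped_numerator_def)+
  have one: "coeff (1 :: tri) 0 = 1" "coeff (1 :: tri) (Suc 0) = 0" "coeff (1 :: tri) 2 = 0"
    by (simp_all add: numeral_2_eq_2)
  note Y0 = shaped_numerator_zeroth_order[OF Y] and Y1 = shaped_numerator_first_order[OF Y]
  have "T0_shape var_in var_out 1 (r + 2) (coeff N 0)"
    using T0_shape_mult[OF X(1), of "Suc 0" "r + 1"] M by (simp add: C all_shapes_def)
  moreover have "T1_shape var_in var_out 1 (r + 2) (coeff N (Suc 0))"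
    using T1_shape_left_01[OF var_sum_nonzero _ _ Y0(1)] M by (simp add: C one all_shapes_def)
  moreover have "T2_shape var_in var_out 1 (r + 2) (coeff N 2)"
    using T2_shape_left_01[OF var_sum_nonzero _ _ Y1(1)] M by (simp add: C one all_shapes_def)
  moreover have "R0_shape var_in var_out 1 (r + 2) (coeff_v 0 N)"
    using R0_shape_mult[OF X(2), of "Suc 0" "r + 1"] M by (simp add: C all_shapes_def)
  moreover have "R1_shape var_in var_out 1 (r + 2) (coeff_v (Suc 0) N)"
    using R1_shape_left_01[OF var_sum_nonzero _ _ Y0(2)] M
    by (simp add: C coeff_v_one all_shapes_def)
  moreover have "S0_shape var_in var_out 1 (r + 2) (at_u0 N)"
    using S0_shape_left_01[OF var_sum_nonzero _ Y1(2)] M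
    by (simp add: C at_u0_vars all_shapes_def)
  ultimately show ?thesis by (simp add: all_shapes_def)
qed

lemma all_shapes_step_left_11:
  assumes N: "N = sum_uvw * (varU + varV) * PM - uvw_monomial (1, 1) * PY"
    and Y: "shaped_numerator PY (l, l + 1)" and M: "all_shapes PM (l + 1) (l + 2)"
  shows "all_shapes N (l + 2) (l + 3)"
proof -
  note C = recursion_coeffs[OF N, unfolded numeral_2_eq_2]
  have X: "shaped_numerator (varU + varV) (1, 1)" by (simp add: shaped_numerator_def)
  note X0 = shaped_numerator_zeroth_order[OF X] and X1 = shaped_numerator_first_order[OF X]
  note Y0 = shaped_numerator_zeroth_order[OF Y]
  have uv: "coeff_v 0 (varU + varV) = var_in" "coeff_v (Suc 0) (varU + varV) = 1"
    "at_u0 (varU + varV) = var_in"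
    by (simp_all add: coeff_v_add coeff_v_vars at_u0_add at_u0_vars)
  note simps = C uv coeff_varU_varV numeral_2_eq_2 numeral_3_eq_3 all_shapes_def
  have "T0_shape var_in var_out (l + 2) (l + 3) (coeff N 0)"
    using T0_shape_mult[OF X0(1), of "l + 1" "l + 2"] M by (simp add: simps)
  moreover have "T1_shape var_in var_out (l + 2) (l + 3) (coeff N (Suc 0))"
    using T1_shape_mult[OF var_sum_nonzero X0(1) X1(1), of "l + 1" "l + 2"] M by (simp add: simps)
  moreover have "T2_shape var_in var_out (l + 2) (l + 3) (coeff N 2)"
    using T2_shape_left_11[OF var_sum_nonzero _ _ Y0(1)] M by (simp add: simps)
  moreover have "R0_shape var_in var_out (l + 2) (l + 3) (coeff_v 0 N)"
    using R0_shape_mult[OF X0(2), of "l + 1" "l + 2"] M by (simp add: simps)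
  moreover have "R1_shape var_in var_out (l + 2) (l + 3) (coeff_v (Suc 0) N)"
    using R1_shape_left_11[OF var_sum_nonzero _ _ Y0(2)] M by (simp add: simps power2_eq_square)
  moreover have "S0_shape var_in var_out (l + 2) (l + 3) (at_u0 N)"
    using S0_shape_mult[OF X1(2), of "l + 1" "l + 2"] M by (simp add: simps)
  ultimately show ?thesis by (simp add: all_shapes_def)
qed

lemma shaped_numerator_step:
  assumes det: "q1 * p2 = p1 * q2 + 1 \<or> p1 * q2 = q1 * p2 + 1"
    and le: "p1 \<le> p2" "q1 \<le> q2"
    and X: "shaped_numerator PX (p1, p2)" and Y: "shaped_numerator PY (q1, q2)"
    and M: "shaped_numerator PM (p1 + q1, p2 + q2)"
  shows "shaped_numerator (sum_uvw * PX * PM - uvw_monomial (p1, p2) * PY)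
    (p1 + (p1 + q1), p2 + (p2 + q2))"
proof -
  define N where "N = sum_uvw * PX * PM - uvw_monomial (p1, p2) * PY"
  have "1 \<le> p2" "1 \<le> q2" using det le by (cases p2; cases q2; auto)+
  then have MA: "all_shapes PM (p1 + q1) (p2 + q2)" using M by (auto simp: shaped_numerator_def)
  consider "p1 = 0" "p2 = 1" "PX = 1" | "p1 = 1" "p2 = 1" "PX = varU + varV"
    | "2 \<le> p2" "all_shapes PX p1 p2"
    using X by (auto simp: shaped_numerator_def)
  then have "all_shapes N (p1 + (p1 + q1)) (p2 + (p2 + q2))"
  proof cases
    case 1
    then have "q1 = 1" using det by simp
    then show ?thesis
      using all_shapes_step_left_01[of N PM PY q2] N_def Y MA 1 by simp
  next
    case 2
    then have "q2 = q1 + 1" using det le by auto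
    then show ?thesis
      using all_shapes_step_left_11[of N PM PY q1] N_def Y MA 2 by (simp add: numeral_3_eq_3)
  next
    case 3
    have "1 \<le> p1"
      using det 3(1) by (cases p1) auto
    then show ?thesis using all_shapes_step_generic[OF N_def 3(2) MA _ 3(1)] by simp
  qed
  moreover have "2 \<le> p2 + (p2 + q2)" using \<open>1 \<le> p2\<close> by simp
  ultimately show ?thesis by (simp add: shaped_numerator_def N_def)
qed

section \<open>The Stern-Brocot walk\<close>

datatype sb_node = SB_Node
  (left_frac: "nat \<times> nat") (right_frac: "nat \<times> nat")
  (left_num: tri) (right_num: tri) (mid_num: tri)

definition mid_frac :: "sb_node \<Rightarrow> nat \<times> nat" where
  "mid_frac s = (fst (left_frac s) + fst (right_frac s), snd (left_frac s) + snd (right_frac s))"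

fun descend :: "bool \<Rightarrow> sb_node \<Rightarrow> sb_node" where
  "descend True s = SB_Node (left_frac s) (mid_frac s) (left_num s) (mid_num s)
     (sum_uvw * left_num s * mid_num s - uvw_monomial (left_frac s) * right_num s)"
| "descend False s = SB_Node (mid_frac s) (right_frac s) (mid_num s) (right_num s)
     (sum_uvw * right_num s * mid_num s - uvw_monomial (right_frac s) * left_num s)"

text \<open>The mediant numerator of the root is the recursion applied around 1/1 with neighbours 0/1
  and 1/0, both of numerator 1.\<close>

definition sb_root :: sb_node where
  "sb_root = SB_Node (0, 1) (1, 1) 1 (varU + varV)
     (sum_uvw * 1 * (varU + varV) - uvw_monomial (0, 1) * 1)"

definition node_at :: "bool list \<Rightarrow> sb_node" where
  "node_at p = fold descend p sb_root"

text \<open>The last conjunct is the polynomial form of the Markov relation between the numerators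
  of two Farey neighbours and their mediant; read as a quadratic in the numerator of the next
  mediant, its other root is the numerator produced by descend (Vieta jumping).\<close>

definition sb_invariant :: "sb_node \<Rightarrow> bool" where
  "sb_invariant s \<longleftrightarrow>
     fst (right_frac s) * snd (left_frac s) = fst (left_frac s) * snd (right_frac s) + 1
     \<and> fst (left_frac s) \<le> snd (left_frac s) \<and> fst (right_frac s) \<le> snd (right_frac s)
     \<and> shaped_numerator (left_num s) (left_frac s) \<and> shaped_numerator (right_num s) (right_frac s)
     \<and> shaped_numerator (mid_num s) (mid_frac s)
     \<and> uvw_monomial (right_frac s) * (left_num s)\<^sup>2 + (mid_num s)\<^sup>2
         + uvw_monomial (left_frac s) * (right_num s)\<^sup>2
       = sum_uvw * left_num s * mid_num s * right_num s"

lemma sb_invariant_descend: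
  assumes "sb_invariant s"
  shows "sb_invariant (descend b s)"
proof -
  obtain l1 l2 r1 r2 where L: "left_frac s = (l1, l2)" and R: "right_frac s = (r1, r2)"
    by (metis prod.exhaust)
  define pl pr pm where "pl = left_num s" and "pr = right_num s" and "pm = mid_num s"
  have det: "r1 * l2 = l1 * r2 + 1" and le: "l1 \<le> l2" "r1 \<le> r2"
    and SL: "shaped_numerator pl (l1, l2)" and SR: "shaped_numerator pr (r1, r2)"
    and SM: "shaped_numerator pm (l1 + r1, l2 + r2)"
    and markov: "uvw_monomial (r1, r2) * pl\<^sup>2 + pm\<^sup>2 + uvw_monomial (l1, l2) * pr\<^sup>2
      = sum_uvw * pl * pm * pr"
    using assms by (simp_all add: sb_invariant_def L R mid_frac_def pl_def pr_def pm_def)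
  show ?thesis
  proof (cases b)
    case True
    have "shaped_numerator (sum_uvw * pl * pm - uvw_monomial (l1, l2) * pr)
        (l1 + (l1 + r1), l2 + (l2 + r2))"
      by (rule shaped_numerator_step[OF _ le SL SR SM]) (use det in simp)
    moreover have "uvw_monomial (l1 + r1, l2 + r2) * pl\<^sup>2
        + (sum_uvw * pl * pm - uvw_monomial (l1, l2) * pr)\<^sup>2 + uvw_monomial (l1, l2) * pm\<^sup>2
        = sum_uvw * pl * (sum_uvw * pl * pm - uvw_monomial (l1, l2) * pr) * pm"
      unfolding uvw_monomial_add using markov by algebra
    ultimately show ?thesis
      using True det le SL SM
      by (simp add: sb_invariant_def mid_frac_def L R pl_def pr_def pm_def algebra_simps)
  next
    case False
    have "shaped_numerator (sum_uvw * pr * pm - uvw_monomial (r1, r2) * pl)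
        (r1 + (r1 + l1), r2 + (r2 + l2))"
      by (rule shaped_numerator_step[OF _ le(2,1) SR SL])
        (use det SM in \<open>simp_all add: add.commute\<close>)
    moreover have "uvw_monomial (r1, r2) * pm\<^sup>2
        + (sum_uvw * pr * pm - uvw_monomial (r1, r2) * pl)\<^sup>2
        + uvw_monomial (l1 + r1, l2 + r2) * pr\<^sup>2
        = sum_uvw * pm * (sum_uvw * pr * pm - uvw_monomial (r1, r2) * pl) * pr"
      unfolding uvw_monomial_add using markov by algebra
    ultimately show ?thesis
      using False det le SR SM
      by (simp add: sb_invariant_def mid_frac_def L R pl_def pr_def pm_def algebra_simps)
  qed
qed

lemma shaped_numerator_12:
  "shaped_numerator (sum_uvw * 1 * (varU + varV) - uvw_monomial (0, 1) * 1) (1, 2)"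
proof -
  define P where "P = sum_uvw * 1 * (varU + varV) - uvw_monomial (0, 1) * 1"
  note C = recursion_coeffs[OF P_def]
  have "coeff P 0 = var_sum\<^sup>2" "coeff P (Suc 0) = var_in" "coeff P 2 = 0"
    "coeff_v 0 P = var_sum * var_in" "coeff_v (Suc 0) P = 2 * var_in" "at_u0 P = var_in\<^sup>2"
    using C by (simp_all add: coeff_varU_varV numeral_2_eq_2 coeff_v_one coeff_v_add coeff_v_vars
        at_u0_add at_u0_vars power2_eq_square algebra_simps)
  then show ?thesis
    unfolding P_def[symmetric]
    by (simp add: shaped_numerator_def all_shapes_def T0_shape_def T1_shape_def
        T2_shape_def R0_shape_def R1_shape_def S0_shape_def T1_factor_def T2_factor_def
        R1_factor_def algebra_simps power2_eq_square eval_nat_numeral)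
qed

lemma sb_invariant_root: "sb_invariant sb_root"
proof -
  have "shaped_numerator 1 (0, 1)" "shaped_numerator (varU + varV) (1, 1)"
    by (simp_all add: shaped_numerator_def)
  moreover have "uvw_monomial (1, 1) * 1\<^sup>2
      + (sum_uvw * 1 * (varU + varV) - uvw_monomial (0, 1) * 1)\<^sup>2
      + uvw_monomial (0, 1) * (varU + varV)\<^sup>2
    = sum_uvw * 1 * (sum_uvw * 1 * (varU + varV) - uvw_monomial (0, 1) * 1) * (varU + varV)"
    by (simp add: uvw_monomial_def sum_uvw_def power2_eq_square algebra_simps)
  ultimately show ?thesis
    using shaped_numerator_12
    by (simp add: sb_invariant_def sb_root_def mid_frac_def numeral_2_eq_2)
qed

lemma sb_invariant_fold: "sb_invariant s \<Longrightarrow> sb_invariant (fold descend p s)"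
  by (induction p arbitrary: s) (simp_all add: sb_invariant_descend)

lemma sb_invariant_node_at: "sb_invariant (node_at p)"
  unfolding node_at_def by (rule sb_invariant_fold[OF sb_invariant_root])

lemma node_at_snoc: "node_at (p @ [b]) = descend b (node_at p)"
  by (simp add: node_at_def)

lemma sb_invariant_pos:
  assumes "sb_invariant s"
  shows "1 \<le> snd (left_frac s)" "1 \<le> snd (right_frac s)"
  using assms unfolding sb_invariant_def
  by (cases "snd (left_frac s)"; cases "snd (right_frac s)"; auto)+

definition frac_less :: "nat \<times> nat \<Rightarrow> nat \<times> nat \<Rightarrow> bool" where
  "frac_less \<rho> \<sigma> \<longleftrightarrow> fst \<rho> * snd \<sigma> < fst \<sigma> * snd \<rho>"

lemma frac_less_trans:
  assumes "frac_less \<rho> \<sigma>" "frac_less \<sigma> \<tau>" "0 < snd \<rho>" "0 < snd \<sigma>"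
  shows "frac_less \<rho> \<tau>"
proof -
  obtain a b c d e f where "\<rho> = (a, b)" "\<sigma> = (c, d)" "\<tau> = (e, f)" by (metis prod.exhaust)
  with assms have h: "a * d < c * b" "c * f < e * d" "0 < b" "0 < d"
    by (simp_all add: frac_less_def)
  have "a * d * f \<le> c * b * f" using h(1) by simp
  also have "\<dots> = (c * f) * b" by (simp add: mult_ac)
  also have "\<dots> < (e * d) * b" using h(2,3) by simp
  finally have "d * (a * f) < d * (e * b)" by (simp add: mult_ac)
  with \<open>\<rho> = (a, b)\<close> \<open>\<tau> = (e, f)\<close> show ?thesis by (simp add: frac_less_def)
qed

lemma mid_frac_between:
  assumes "sb_invariant s"
  shows "frac_less (left_frac s) (mid_frac s)" "frac_less (mid_frac s) (right_frac s)"
  using assms by (auto simp: sb_invariant_def frac_less_def mid_frac_def algebra_simps)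

lemma mid_frac_fold_between:
  assumes "sb_invariant s"
  shows "frac_less (left_frac s) (mid_frac (fold descend p s))
    \<and> frac_less (mid_frac (fold descend p s)) (right_frac s)"
  using assms
proof (induction p arbitrary: s)
  case Nil
  then show ?case using mid_frac_between by simp
next
  case (Cons b p)
  define \<mu> where "\<mu> = mid_frac (fold descend p (descend b s))"
  have inv: "sb_invariant (descend b s)" by (rule sb_invariant_descend[OF Cons.prems])
  have IH: "frac_less (left_frac (descend b s)) \<mu>" "frac_less \<mu> (right_frac (descend b s))"
    using Cons.IH[OF inv] by (simp_all add: \<mu>_def)
  have pos: "0 < snd \<mu>" "0 < snd (mid_frac s)" "0 < snd (left_frac s)"
    using sb_invariant_pos[OF sb_invariant_fold[OF inv, of p]] sb_invariant_pos[OF Cons.prems]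
    by (simp_all add: \<mu>_def mid_frac_def)
  note between = mid_frac_between[OF Cons.prems]
  show ?case
  proof (cases b)
    case True
    then show ?thesis
      using IH frac_less_trans[of \<mu> "mid_frac s" "right_frac s"] between pos by (simp add: \<mu>_def)
  next
    case False
    then show ?thesis
      using IH frac_less_trans[of "left_frac s" "mid_frac s" \<mu>] between pos by (simp add: \<mu>_def)
  qed
qed

lemma frac_less_irrefl: "\<not> frac_less \<rho> \<rho>"
  by (simp add: frac_less_def)

lemma frac_less_asym: "frac_less \<rho> \<sigma> \<Longrightarrow> \<not> frac_less \<sigma> \<rho>"
  by (auto simp: frac_less_def)

lemma mid_frac_fold_Cons:
  assumes "sb_invariant s"
  shows "if b then frac_less (mid_frac (fold descend p (descend b s))) (mid_frac s)
    else frac_less (mid_frac s) (mid_frac (fold descend p (descend b s)))"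
  using mid_frac_fold_between[OF sb_invariant_descend[OF assms], of b p] by (cases b) simp_all

lemma mid_frac_fold_inj:
  assumes "sb_invariant s" "mid_frac (fold descend p s) = mid_frac (fold descend q s)"
  shows "p = q"
  using assms
proof (induction p arbitrary: s q)
  case Nil
  show ?case
  proof (cases q)
    case (Cons c q')
    with Nil.prems(2) mid_frac_fold_Cons[OF Nil.prems(1), of c q'] frac_less_irrefl
    show ?thesis by (cases c) auto
  qed simp
next
  case (Cons b p)
  note side = mid_frac_fold_Cons[OF Cons.prems(1)]
  show ?case
  proof (cases q)
    case Nil
    then show ?thesis using Cons.prems(2) side[of b p] frac_less_irrefl by (cases b) auto
  next
    case (Cons c q')
    show ?thesis
    proof (cases "b = c")
      case True
      then show ?thesis
        using Cons.IH[OF sb_invariant_descend[OF Cons.prems(1), of c], of q'] Cons.prems(2)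
          \<open>q = c # q'\<close>
        by simp
    next
      case False
      then show ?thesis
        using Cons.prems(2) \<open>q = c # q'\<close> side[of b p] side[of c q'] frac_less_asym
        by (cases b; cases c) auto
    qed
  qed
qed

lemma coprime_common_factor_eq_1:
  fixes k x y :: nat
  assumes "coprime (k * x) (k * y)"
  shows "k = 1"
  using assms by simp

lemma exists_fold_mid_frac:
  assumes "sb_invariant s" "1 \<le> \<alpha>" "1 \<le> \<beta>" "coprime e f"
    and "e = \<alpha> * fst (left_frac s) + \<beta> * fst (right_frac s)"
    and "f = \<alpha> * snd (left_frac s) + \<beta> * snd (right_frac s)"
  shows "\<exists>p. mid_frac (fold descend p s) = (e, f)"
  using assms
proof (induction "\<alpha> + \<beta>" arbitrary: s \<alpha> \<beta> rule: less_induct)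
  case less
  note inv = sb_invariant_descend[OF less.prems(1)]
  consider "\<alpha> = \<beta>" | "\<beta> < \<alpha>" | "\<alpha> < \<beta>" by linarith
  then show ?case
  proof cases
    case 1
    then have "coprime (\<alpha> * (fst (left_frac s) + fst (right_frac s)))
        (\<alpha> * (snd (left_frac s) + snd (right_frac s)))"
      using less.prems(4-6) by (simp add: algebra_simps)
    then have "\<alpha> = 1" "\<beta> = 1" using 1 coprime_common_factor_eq_1 by blast+
    then have "mid_frac (fold descend [] s) = (e, f)"
      using less.prems(5,6) by (simp add: mid_frac_def)
    then show ?thesis by blast
  next
    case 2
    have "\<exists>p. mid_frac (fold descend p (descend True s)) = (e, f)"
      by (rule less.hyps[of "\<alpha> - \<beta>" \<beta> "descend True s"])
        (use 2 inv[of True] less.prems in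
          \<open>simp_all add: mid_frac_def diff_mult_distrib distrib_left\<close>)
    then obtain p where "mid_frac (fold descend p (descend True s)) = (e, f)" ..
    then have "mid_frac (fold descend (True # p) s) = (e, f)" by simp
    then show ?thesis by blast
  next
    case 3
    have "\<exists>p. mid_frac (fold descend p (descend False s)) = (e, f)"
      by (rule less.hyps[of \<alpha> "\<beta> - \<alpha>" "descend False s"])
        (use 3 inv[of False] less.prems in
          \<open>simp_all add: mid_frac_def diff_mult_distrib distrib_left\<close>)
    then obtain p where "mid_frac (fold descend p (descend False s)) = (e, f)" ..
    then have "mid_frac (fold descend (False # p) s) = (e, f)" by simp
    then show ?thesis by blast
  qed
qed

lemma exists_node_at:
  assumes "coprime e f" "1 \<le> e" "e < f"
  shows "\<exists>p. mid_frac (node_at p) = (e, f)"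
  using exists_fold_mid_frac[OF sb_invariant_root, of "f - e" e e f] assms
  by (simp add: node_at_def sb_root_def)

lemma node_at_inj: "mid_frac (node_at p) = mid_frac (node_at q) \<Longrightarrow> p = q"
  unfolding node_at_def by (rule mid_frac_fold_inj[OF sb_invariant_root])

lemma farey_neighbour_unique:
  fixes m1 m2 x y x' y' :: nat
  assumes xy: "m1 * y = m2 * x + 1" and xy': "m1 * y' = m2 * x' + 1"
    and "y \<le> m2" "y' \<le> m2"
  shows "x = x' \<and> y = y'"
proof -
  have "1 \<le> y" "1 \<le> y'" using xy xy' by (cases y; cases y'; simp)+
  have "coprime m2 m1"
  proof (rule coprimeI)
    fix k assume "k dvd m2" "k dvd m1"
    then have "k dvd m1 * y" "k dvd m2 * x" by simp_all
    then have "k dvd 1" using xy by (metis dvd_add_right_iff)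
    then show "is_unit k" by simp
  qed
  have "int m1 * (int y - int y') = int m2 * (int x - int x')"
    using arg_cong[OF xy, of int] arg_cong[OF xy', of int] by (simp add: algebra_simps)
  then have "int m2 dvd int m1 * (int y - int y')" by (metis dvd_triv_left)
  then have dvd: "int m2 dvd int y - int y'"
    using \<open>coprime m2 m1\<close> by (simp add: coprime_dvd_mult_right_iff)
  have "y = y'"
  proof (rule ccontr)
    assume "y \<noteq> y'"
    then have "int m2 \<le> \<bar>int y - int y'\<bar>" using dvd_imp_le_int[OF _ dvd] by simp
    then show False using \<open>1 \<le> y\<close> \<open>1 \<le> y'\<close> assms(3,4) by linarith
  qed
  moreover have "1 \<le> m2" using \<open>1 \<le> y\<close> assms(3) by simp
  ultimately show ?thesis using xy xy' by simp
qed

lemma node_frac_unique: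
  assumes "sb_invariant s" "mid_frac s = (a + c, b + d)" "a * d = b * c + 1"
  shows "left_frac s = (c, d) \<and> right_frac s = (a, b)"
proof -
  obtain l1 l2 r1 r2 where L: "left_frac s = (l1, l2)" and R: "right_frac s = (r1, r2)"
    by (metis prod.exhaust)
  have det: "r1 * l2 = l1 * r2 + 1" using assms(1) by (simp add: sb_invariant_def L R)
  have m: "l1 + r1 = a + c" "l2 + r2 = b + d" using assms(2) by (simp_all add: mid_frac_def L R)
  have "(a + c) * l2 = (l1 + r1) * l2" using m by simp
  also have "\<dots> = l1 * (l2 + r2) + 1" using det by (simp add: algebra_simps)
  also have "\<dots> = (b + d) * l1 + 1" using m by (simp add: mult.commute)
  finally have "(a + c) * l2 = (b + d) * l1 + 1" .
  moreover have "(a + c) * d = (b + d) * c + 1" using assms(3) by (simp add: algebra_simps)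
  ultimately have "l1 = c \<and> l2 = d"
    using farey_neighbour_unique[of "a + c" l2 "b + d" l1 d c] m by simp
  with m show ?thesis by (simp add: L R)
qed

section \<open>Evaluation in the fraction field\<close>

definition ev1 :: "'a::comm_ring_1 \<Rightarrow> int poly \<Rightarrow> 'a" where
  "ev1 u r = poly (map_poly of_int r) u"

definition ev2 :: "'a::comm_ring_1 \<Rightarrow> 'a \<Rightarrow> int poly poly \<Rightarrow> 'a" where
  "ev2 u v q = poly (map_poly (ev1 u) q) v"

lemma ev1_hom: "ev1 u 0 = 0" "ev1 u (a + b) = ev1 u a + ev1 u b"
  "ev1 u (a * b) = ev1 u a * ev1 u b" "ev1 u 1 = 1"
  unfolding ev1_def by (rule poly_map_poly_hom; simp)+

lemma ev2_hom: "ev2 u v 0 = 0" "ev2 u v (a + b) = ev2 u v a + ev2 u v b"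
  "ev2 u v (a * b) = ev2 u v a * ev2 u v b" "ev2 u v 1 = 1"
  unfolding ev2_def by (rule poly_map_poly_hom; simp add: ev1_hom)+

lemma ev3_eq: "ev3 p u v w = poly (map_poly (ev2 u v) p) w"
  unfolding ev3_def ev2_def ev1_def ..

lemma ev3_hom: "ev3 (p + q) u v w = ev3 p u v w + ev3 q u v w"
  "ev3 (p * q) u v w = ev3 p u v w * ev3 q u v w" "ev3 1 u v w = 1" "ev3 0 u v w = 0"
  unfolding ev3_eq by (rule poly_map_poly_hom; simp add: ev2_hom)+

lemma ev3_diff: "ev3 (p - q) u v w = ev3 p u v w - ev3 q u v w"
  using ev3_hom(1)[of "p - q" q u v w] by (simp add: eq_diff_eq)

lemma ev3_power: "ev3 (p ^ n) u v w = ev3 p u v w ^ n"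
  by (induction n) (simp_all add: ev3_hom)

lemma ev3_vars: "ev3 varU u v w = u" "ev3 varV u v w = v" "ev3 varW u v w = w"
  by (simp_all add: ev3_def varU_def varV_def varW_def map_poly_pCons)

lemma hom_ev3:
  fixes \<phi> :: "'a::comm_ring_1 \<Rightarrow> 'b::comm_ring_1"
  assumes \<phi>0: "\<phi> 0 = 0" and \<phi>add: "\<And>a b. \<phi> (a + b) = \<phi> a + \<phi> b"
    and \<phi>mult: "\<And>a b. \<phi> (a * b) = \<phi> a * \<phi> b" and \<phi>1: "\<phi> 1 = 1"
  shows "\<phi> (ev3 p a b c) = ev3 p (\<phi> a) (\<phi> b) (\<phi> c)"
proof -
  have \<phi>minus: "\<phi> (- x) = - \<phi> x" for x
    using \<phi>add[of "- x" x] \<phi>0 by (simp add: eq_neg_iff_add_eq_0)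
  have \<phi>int: "\<phi> (of_int k) = of_int k" for k
  proof (induction k rule: int_induct[of _ 0])
    case (step2 i)
    have "\<phi> (of_int (i - 1)) = \<phi> (of_int i) + \<phi> (- 1)" using \<phi>add[of "of_int i" "- 1"] by simp
    then show ?case using step2 \<phi>minus \<phi>1 by simp
  qed (simp_all add: \<phi>0 \<phi>add \<phi>1)
  have "\<phi> (ev1 a r) = ev1 (\<phi> a) r" for r
    unfolding ev1_def by (subst hom_poly_map_poly[OF \<phi>0 \<phi>add \<phi>mult]) (simp_all add: o_def \<phi>int)
  then have "\<phi> (ev2 a b q) = ev2 (\<phi> a) (\<phi> b) q" for q
    unfolding ev2_def by (subst hom_poly_map_poly[OF \<phi>0 \<phi>add \<phi>mult]) (simp_all add: o_def ev1_hom)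
  then show ?thesis
    unfolding ev3_eq by (subst hom_poly_map_poly[OF \<phi>0 \<phi>add \<phi>mult]) (simp_all add: o_def ev2_hom)
qed

text \<open>Substituting squares is injective; this is what makes the numerator in the definition of
  markovP unique.\<close>

definition square_var1 :: "int poly \<Rightarrow> int poly" where
  "square_var1 r = pcompose r [:0, 0, 1:]"

definition square_var2 :: "int poly poly \<Rightarrow> int poly poly" where
  "square_var2 q = pcompose (map_poly square_var1 q) [:0, 0, 1:]"

definition square_vars :: "tri \<Rightarrow> tri" where
  "square_vars p = pcompose (map_poly square_var2 p) [:0, 0, 1:]"

lemma degree_monom_2: "degree [:0, 0, 1 :: 'a::comm_ring_1:] = 2"
  by (simp add: degree_pCons_eq)

lemma square_var1_eq_0_iff: "square_var1 r = 0 \<longleftrightarrow> r = 0"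
  unfolding square_var1_def using pcompose_eq_0[of r] by (auto simp: degree_monom_2)

lemma square_var2_eq_0_iff: "square_var2 q = 0 \<longleftrightarrow> q = 0"
  unfolding square_var2_def using pcompose_eq_0[of "map_poly square_var1 q"]
  by (auto simp: degree_monom_2 map_poly_eq_0_iff square_var1_eq_0_iff)

lemma square_vars_eq_0_iff: "square_vars p = 0 \<longleftrightarrow> p = 0"
  unfolding square_vars_def using pcompose_eq_0[of "map_poly square_var2 p"]
  by (auto simp: degree_monom_2 map_poly_eq_0_iff square_var2_eq_0_iff)

lemma ev3_squares: "ev3 p (varU\<^sup>2) (varV\<^sup>2) (varW\<^sup>2) = square_vars p"
proof -
  define \<iota> :: "int poly \<Rightarrow> tri" where "\<iota> b = [:[:b:]:]" for b
  define \<kappa> :: "int poly poly \<Rightarrow> tri" where "\<kappa> b = [:b:]" for b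
  have \<iota>_hom: "\<iota> 0 = 0" "\<iota> (a + b) = \<iota> a + \<iota> b" "\<iota> (a * b) = \<iota> a * \<iota> b" for a b
    unfolding \<iota>_def by simp_all
  have \<kappa>_hom: "\<kappa> 0 = 0" "\<kappa> (a + b) = \<kappa> a + \<kappa> b" "\<kappa> (a * b) = \<kappa> a * \<kappa> b" for a b
    unfolding \<kappa>_def by simp_all
  have u2: "varU\<^sup>2 = \<iota> [:0, 0, 1:]" unfolding \<iota>_def varU_def by (simp add: power2_eq_square)
  have v2: "varV\<^sup>2 = \<kappa> [:0, 0, 1:]" unfolding \<kappa>_def varV_def by (simp add: power2_eq_square)
  have w2: "varW\<^sup>2 = [:0, 0, 1:]" unfolding varW_def by (simp add: power2_eq_square)
  have of_int_tri: "(of_int k :: tri) = \<iota> [:k:]" for k unfolding \<iota>_def by (simp add: of_int_poly)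
  have ev1_sq: "ev1 (varU\<^sup>2) r = \<iota> (square_var1 r)" for r
  proof -
    have "ev1 (varU\<^sup>2) r = poly (map_poly (\<lambda>k. \<iota> [:k:]) r) (\<iota> [:0, 0, 1:])"
      unfolding ev1_def u2 of_int_tri ..
    also have "\<dots> = \<iota> (poly (map_poly (\<lambda>k. [:k:]) r) [:0, 0, 1:])"
      by (subst hom_poly_map_poly[OF \<iota>_hom]) (simp_all add: o_def)
    finally show ?thesis by (simp add: square_var1_def pcompose_altdef)
  qed
  have ev2_sq: "ev2 (varU\<^sup>2) (varV\<^sup>2) q = \<kappa> (square_var2 q)" for q
  proof -
    have "ev2 (varU\<^sup>2) (varV\<^sup>2) q = poly (map_poly (\<lambda>r. \<kappa> [:square_var1 r:]) q) (\<kappa> [:0, 0, 1:])"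
      unfolding ev2_def v2 ev1_sq by (simp add: \<iota>_def \<kappa>_def)
    also have "\<dots> = \<kappa> (poly (map_poly (\<lambda>r. [:square_var1 r:]) q) [:0, 0, 1:])"
      by (subst hom_poly_map_poly[OF \<kappa>_hom]) (simp_all add: o_def square_var1_def)
    also have "\<dots> = \<kappa> (square_var2 q)"
      by (simp add: square_var2_def pcompose_altdef map_poly_map_poly square_var1_def o_def)
    finally show ?thesis .
  qed
  show ?thesis
    unfolding ev3_eq ev2_sq w2 square_vars_def pcompose_altdef
    by (simp add: \<kappa>_def map_poly_map_poly square_var2_def square_var1_def o_def)
qed

definition eval_sq :: "tri \<Rightarrow> K" where
  "eval_sq P = ev3 P (Xk\<^sup>2) (Yk\<^sup>2) (Zk\<^sup>2)"

definition xyz_monomial :: "nat \<times> nat \<Rightarrow> K" where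
  "xyz_monomial \<rho> = Xk ^ fst \<rho> * Yk ^ snd \<rho> * Zk ^ (fst \<rho> + snd \<rho>)"

text \<open>The Laurent polynomial P(x^2, y^2, z^2) / (x^(a-1) y^(b-1) z^(a+b-1)) with numerator P
  at a/b, written without truncated exponents.\<close>

definition laurent :: "tri \<Rightarrow> nat \<times> nat \<Rightarrow> K" where
  "laurent P \<rho> = eval_sq P * (Xk * Yk * Zk) / xyz_monomial \<rho>"

lemma Fract_eq_0_iff: "Fract (a :: tri) 1 = 0 \<longleftrightarrow> a = 0"
  using eq_fract(1)[of 1 1 a 0] by (simp add: Zero_fract_def)

lemma eval_sq_Fract: "eval_sq P = Fract (square_vars P) 1"
proof -
  have "Fract (ev3 P (varU\<^sup>2) (varV\<^sup>2) (varW\<^sup>2)) 1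
      = ev3 P (Fract (varU\<^sup>2) 1) (Fract (varV\<^sup>2) 1) (Fract (varW\<^sup>2) 1)"
    by (rule hom_ev3) (simp_all add: fract_collapse)
  moreover have "Fract (varU\<^sup>2) 1 = Xk\<^sup>2" "Fract (varV\<^sup>2) 1 = Yk\<^sup>2" "Fract (varW\<^sup>2) 1 = Zk\<^sup>2"
    by (simp_all add: Xk_def Yk_def Zk_def power2_eq_square)
  ultimately show ?thesis by (simp add: eval_sq_def ev3_squares)
qed

lemma eval_sq_eq_0_iff: "eval_sq P = 0 \<longleftrightarrow> P = 0"
  by (simp add: eval_sq_Fract Fract_eq_0_iff square_vars_eq_0_iff)

lemma XYZ_nonzero: "Xk \<noteq> 0" "Yk \<noteq> 0" "Zk \<noteq> 0"
  by (simp_all add: Xk_def Yk_def Zk_def Fract_eq_0_iff varU_def varV_def varW_def)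

lemma xyz_monomial_nonzero: "xyz_monomial \<rho> \<noteq> 0"
  by (simp add: xyz_monomial_def XYZ_nonzero)

lemma xyz_monomial_add: "xyz_monomial (a + c, b + d) = xyz_monomial (a, b) * xyz_monomial (c, d)"
  by (simp add: xyz_monomial_def power_add algebra_simps)

lemma eval_sq_hom:
  "eval_sq (P + Q) = eval_sq P + eval_sq Q" "eval_sq (P * Q) = eval_sq P * eval_sq Q"
  "eval_sq (P - Q) = eval_sq P - eval_sq Q" "eval_sq 1 = 1" "eval_sq (P ^ n) = eval_sq P ^ n"
  by (simp_all add: eval_sq_def ev3_hom ev3_diff ev3_power)

lemma eval_sq_vars: "eval_sq varU = Xk\<^sup>2" "eval_sq varV = Yk\<^sup>2" "eval_sq varW = Zk\<^sup>2"
  by (simp_all add: eval_sq_def ev3_vars)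

lemma eval_sq_uvw_monomial: "eval_sq (uvw_monomial \<rho>) = (xyz_monomial \<rho>)\<^sup>2"
  by (simp add: uvw_monomial_def xyz_monomial_def eval_sq_hom eval_sq_vars
      power_mult[symmetric] power_mult_distrib mult.commute)

lemma laurent_nonzero: "P \<noteq> 0 \<Longrightarrow> laurent P \<rho> \<noteq> 0"
  by (simp add: laurent_def eval_sq_eq_0_iff XYZ_nonzero xyz_monomial_nonzero)

text \<open>The exchange relation P' P_R = m_R P_L^2 + P_M^2 between numerators becomes the Markov
  recursion M' M_R = M_L^2 + M_M^2, because m_R evaluates to the square of the monomial
  x^c y^d z^(c+d) of R = c/d.\<close>

lemma laurent_exchange:
  assumes "A * B = uvw_monomial \<sigma> * C\<^sup>2 + D\<^sup>2"
  shows "laurent A (fst \<tau> + (fst \<tau> + fst \<sigma>), snd \<tau> + (snd \<tau> + snd \<sigma>)) * laurent B \<sigma>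
     = (laurent C \<tau>)\<^sup>2 + (laurent D (fst \<tau> + fst \<sigma>, snd \<tau> + snd \<sigma>))\<^sup>2"
proof -
  define s t where "s = xyz_monomial \<sigma>" and "t = xyz_monomial \<tau>"
  have "s \<noteq> 0" "t \<noteq> 0" by (simp_all add: s_def t_def xyz_monomial_nonzero)
  have e: "eval_sq A * eval_sq B = s\<^sup>2 * (eval_sq C)\<^sup>2 + (eval_sq D)\<^sup>2"
    using arg_cong[OF assms, of eval_sq] by (simp add: eval_sq_hom eval_sq_uvw_monomial s_def)
  have "xyz_monomial (fst \<tau> + (fst \<tau> + fst \<sigma>), snd \<tau> + (snd \<tau> + snd \<sigma>)) = t * t * s"
    "xyz_monomial (fst \<tau> + fst \<sigma>, snd \<tau> + snd \<sigma>) = t * s"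
    by (simp_all add: xyz_monomial_add s_def t_def mult_ac)
  then have "laurent A (fst \<tau> + (fst \<tau> + fst \<sigma>), snd \<tau> + (snd \<tau> + snd \<sigma>)) * laurent B \<sigma>
      = (eval_sq A * eval_sq B) * (Xk * Yk * Zk)\<^sup>2 / (t\<^sup>2 * s\<^sup>2)"
    "(laurent C \<tau>)\<^sup>2 + (laurent D (fst \<tau> + fst \<sigma>, snd \<tau> + snd \<sigma>))\<^sup>2
      = (s\<^sup>2 * (eval_sq C)\<^sup>2 + (eval_sq D)\<^sup>2) * (Xk * Yk * Zk)\<^sup>2 / (t\<^sup>2 * s\<^sup>2)"
    using \<open>s \<noteq> 0\<close> \<open>t \<noteq> 0\<close>
    by (simp_all add: laurent_def s_def[symmetric] t_def[symmetric]
        power2_eq_square field_simps)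
  with e show ?thesis by simp
qed

section \<open>The Markov polynomials\<close>

definition numerator_at :: "nat \<times> nat \<Rightarrow> tri" where
  "numerator_at \<rho> = (if \<rho> = (0, 1) \<or> \<rho> = (1, 0) then 1 else if \<rho> = (1, 1) then varU + varV
     else mid_num (node_at (SOME p. mid_frac (node_at p) = \<rho>)))"

definition markov_laurent :: "nat \<times> nat \<Rightarrow> K" where
  "markov_laurent \<rho> = (if \<rho> \<in> markov_index then laurent (numerator_at \<rho>) \<rho> else 0)"

lemma mid_frac_node_at_not_base:
  "mid_frac (node_at p) \<noteq> (0, 1)" "mid_frac (node_at p) \<noteq> (1, 0)" "mid_frac (node_at p) \<noteq> (1, 1)"
  using sb_invariant_pos[OF sb_invariant_node_at[of p]] by (auto simp: mid_frac_def)

lemma numerator_at_mid_frac: "numerator_at (mid_frac (node_at p)) = mid_num (node_at p)"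
proof -
  have "(SOME q. mid_frac (node_at q) = mid_frac (node_at p)) = p"
    by (rule some_equality) (simp_all add: node_at_inj)
  then show ?thesis using mid_frac_node_at_not_base[of p] by (simp add: numerator_at_def)
qed

lemma numerator_at_left_right:
  "left_num (node_at p) = numerator_at (left_frac (node_at p))"
  "right_num (node_at p) = numerator_at (right_frac (node_at p))"
proof (induction p rule: rev_induct)
  case Nil
  show "left_num (node_at []) = numerator_at (left_frac (node_at []))"
    "right_num (node_at []) = numerator_at (right_frac (node_at []))"
    by (simp_all add: node_at_def sb_root_def numerator_at_def)
next
  case (snoc b p)
  show "left_num (node_at (p @ [b])) = numerator_at (left_frac (node_at (p @ [b])))"
    "right_num (node_at (p @ [b])) = numerator_at (right_frac (node_at (p @ [b])))"
    using snoc numerator_at_mid_frac[of p] by (cases b; simp add: node_at_snoc)+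
qed

lemma coprime_if_det:
  fixes x y z w :: nat
  assumes "x * y = z * w + 1"
  shows "coprime x w" "coprime y z"
proof -
  have "k dvd 1" if "k dvd x * y" "k dvd z * w" for k
    using that assms by (metis dvd_add_right_iff)
  then show "coprime x w" "coprime y z"
    by (auto intro!: coprimeI)
qed

lemma node_at_fracs_in_index:
  "left_frac (node_at p) \<in> markov_index" "right_frac (node_at p) \<in> markov_index"
  "mid_frac (node_at p) \<in> markov_index"
proof -
  obtain l1 l2 r1 r2
    where L: "left_frac (node_at p) = (l1, l2)" and R: "right_frac (node_at p) = (r1, r2)"
    by (metis prod.exhaust)
  have det: "r1 * l2 = l1 * r2 + 1" and le: "l1 \<le> l2" "r1 \<le> r2"
    using sb_invariant_node_at[of p] by (simp_all add: sb_invariant_def L R)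
  have "r1 * (l2 + r2) = (l1 + r1) * r2 + 1" using det by (simp add: algebra_simps)
  then have "coprime (l2 + r2) (l1 + r1)" by (rule coprime_if_det(2))
  with coprime_if_det[OF det] le show
    "left_frac (node_at p) \<in> markov_index" "right_frac (node_at p) \<in> markov_index"
    "mid_frac (node_at p) \<in> markov_index"
    by (simp_all add: markov_index_def mid_frac_def L R coprime_commute)
qed

lemma markov_laurent_node_at:
  "markov_laurent (left_frac (node_at p)) = laurent (left_num (node_at p)) (left_frac (node_at p))"
  "markov_laurent (right_frac (node_at p))
    = laurent (right_num (node_at p)) (right_frac (node_at p))"
  "markov_laurent (mid_frac (node_at p)) = laurent (mid_num (node_at p)) (mid_frac (node_at p))"
  using node_at_fracs_in_index[of p] numerator_at_left_right[of p] numerator_at_mid_frac[of p]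
  by (simp_all add: markov_laurent_def)

lemma shaped_numerator_nonzero: "shaped_numerator P \<rho> \<Longrightarrow> P \<noteq> 0"
  using var_sum_nonzero
  by (auto simp: shaped_numerator_def all_shapes_def T0_shape_def varU_def varV_def)

lemma markov_laurent_node_at_nonzero:
  "markov_laurent (left_frac (node_at p)) \<noteq> 0" "markov_laurent (right_frac (node_at p)) \<noteq> 0"
proof -
  have "left_num (node_at p) \<noteq> 0" "right_num (node_at p) \<noteq> 0"
    using sb_invariant_node_at[of p] unfolding sb_invariant_def by (metis shaped_numerator_nonzero)+
  then show "markov_laurent (left_frac (node_at p)) \<noteq> 0"
    "markov_laurent (right_frac (node_at p)) \<noteq> 0"
    by (simp_all add: markov_laurent_node_at laurent_nonzero)
qed

lemma markov_laurent_descend: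
  "markov_laurent (mid_frac (node_at (p @ [True]))) * markov_laurent (right_frac (node_at p))
     = (markov_laurent (left_frac (node_at p)))\<^sup>2 + (markov_laurent (mid_frac (node_at p)))\<^sup>2"
  "markov_laurent (mid_frac (node_at (p @ [False]))) * markov_laurent (left_frac (node_at p))
     = (markov_laurent (right_frac (node_at p)))\<^sup>2 + (markov_laurent (mid_frac (node_at p)))\<^sup>2"
proof -
  define s where "s = node_at p"
  have markov: "uvw_monomial (right_frac s) * (left_num s)\<^sup>2 + (mid_num s)\<^sup>2
      + uvw_monomial (left_frac s) * (right_num s)\<^sup>2
      = sum_uvw * left_num s * mid_num s * right_num s"
    using sb_invariant_node_at[of p] by (simp add: sb_invariant_def s_def)
  have "(sum_uvw * left_num s * mid_num s - uvw_monomial (left_frac s) * right_num s) * right_num s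
      = uvw_monomial (right_frac s) * (left_num s)\<^sup>2 + (mid_num s)\<^sup>2"
    using markov by algebra
  from laurent_exchange[OF this, of "left_frac s"]
  show "markov_laurent (mid_frac (node_at (p @ [True]))) * markov_laurent (right_frac (node_at p))
     = (markov_laurent (left_frac (node_at p)))\<^sup>2 + (markov_laurent (mid_frac (node_at p)))\<^sup>2"
    using markov_laurent_node_at[of p] markov_laurent_node_at(3)[of "p @ [True]"]
    by (simp add: node_at_snoc s_def[symmetric] mid_frac_def add_ac)
  have "(sum_uvw * right_num s * mid_num s - uvw_monomial (right_frac s) * left_num s) * left_num s
      = uvw_monomial (left_frac s) * (right_num s)\<^sup>2 + (mid_num s)\<^sup>2"
    using markov by algebra
  from laurent_exchange[OF this, of "right_frac s"]
  show "markov_laurent (mid_frac (node_at (p @ [False]))) * markov_laurent (left_frac (node_at p))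
     = (markov_laurent (right_frac (node_at p)))\<^sup>2 + (markov_laurent (mid_frac (node_at p)))\<^sup>2"
    using markov_laurent_node_at[of p] markov_laurent_node_at(3)[of "p @ [False]"]
    by (simp add: node_at_snoc s_def[symmetric] mid_frac_def add_ac)
qed

lemma markov_laurent_base:
  "markov_laurent (1, 0) = Yk" "markov_laurent (0, 1) = Xk"
  "markov_laurent (1, 1) = (Xk\<^sup>2 + Yk\<^sup>2) / Zk"
  using XYZ_nonzero
  by (simp_all add: markov_laurent_def markov_index_def numerator_at_def laurent_def
      xyz_monomial_def eval_sq_hom eval_sq_vars field_simps power2_eq_square)

lemma markov_laurent_12:
  "markov_laurent (1, 2)
    = ((markov_laurent (0, 1))\<^sup>2 + (markov_laurent (1, 1))\<^sup>2) / markov_laurent (1, 0)"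
proof -
  have "markov_laurent (1, 2) = laurent (mid_num (node_at [])) (1, 2)"
    using markov_laurent_node_at(3)[of "[]"]
    by (simp add: node_at_def sb_root_def mid_frac_def numeral_2_eq_2)
  also have "\<dots> = ((Xk\<^sup>2 + Yk\<^sup>2 + Zk\<^sup>2) * (Xk\<^sup>2 + Yk\<^sup>2) - (Yk * Zk)\<^sup>2) * (Xk * Yk * Zk)
      / (Xk * Yk\<^sup>2 * Zk ^ 3)"
    by (simp add: node_at_def sb_root_def laurent_def sum_uvw_def eval_sq_hom eval_sq_vars
        eval_sq_uvw_monomial xyz_monomial_def eval_nat_numeral)
  also have "\<dots> = (Xk\<^sup>2 + ((Xk\<^sup>2 + Yk\<^sup>2) / Zk)\<^sup>2) / Yk"
    using XYZ_nonzero by (simp add: field_simps power2_eq_square eval_nat_numeral)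
  finally show ?thesis unfolding markov_laurent_base .
qed

lemma markov_index_cases:
  assumes "(e, f) \<in> markov_index" "(e, f) \<notin> {(0, 1), (1, 0), (1, 1)}"
  shows "coprime e f" "1 \<le> e" "e < f"
proof -
  show "coprime e f" using assms(1) by (simp add: markov_index_def)
  moreover have "e \<le> f" using assms by (auto simp: markov_index_def)
  ultimately show "1 \<le> e" "e < f" using assms(2) by (cases e; auto simp: le_less)+
qed

lemma markov_laurent_rule:
  assumes ab: "(a, b) \<in> markov_index" and cd: "(c, d) \<in> markov_index"
    and det: "\<bar>int a * int d - int b * int c\<bar> = 1" and le: "a + 2 * c \<le> b + 2 * d"
  shows "markov_laurent (a + 2 * c, b + 2 * d)
    = ((markov_laurent (c, d))\<^sup>2 + (markov_laurent (a + c, b + d))\<^sup>2) / markov_laurent (a, b)"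
proof -
  have "\<bar>int (a * d) - int (b * c)\<bar> = 1" using det by simp
  then have det': "a * d = b * c + 1 \<or> b * c = a * d + 1" by arith
  show ?thesis
  proof (cases "(a, b) = (1, 0)")
    case True
    then have "c = 0" "d = 1" using det' le cd by (auto simp: markov_index_def)
    with True show ?thesis using markov_laurent_12 by (simp add: numeral_2_eq_2)
  next
    case False
    then have "a \<le> b" "c \<le> d" using ab cd det' le by (auto simp: markov_index_def)
    have "coprime (a + c) (b + d)"
      using det' coprime_if_det(1)[of "a + c" d c "b + d"] coprime_if_det(1)[of "b + d" c d "a + c"]
      by (auto simp: algebra_simps coprime_commute)
    moreover have "(a + c, b + d) \<notin> {(0, 1), (1, 0), (1, 1)}"
      using det' \<open>a \<le> b\<close> \<open>c \<le> d\<close> by (auto simp: add_is_1)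
    moreover have "(a + c, b + d) \<in> markov_index"
      using \<open>coprime (a + c) (b + d)\<close> \<open>a \<le> b\<close> \<open>c \<le> d\<close> by (simp add: markov_index_def)
    ultimately obtain p where p: "mid_frac (node_at p) = (a + c, b + d)"
      using markov_index_cases[of "a + c" "b + d"] exists_node_at by blast
    consider "a * d = b * c + 1" | "c * b = d * a + 1" using det' by (auto simp: mult.commute)
    then show ?thesis
    proof cases
      case 1
      then have L: "left_frac (node_at p) = (c, d)" and R: "right_frac (node_at p) = (a, b)"
        using node_frac_unique[OF sb_invariant_node_at, of p a c b d] p by simp_all
      have "mid_frac (node_at (p @ [True])) = (a + 2 * c, b + 2 * d)"
        using L R by (simp add: node_at_snoc mid_frac_def)
      with markov_laurent_descend(1)[of p] markov_laurent_node_at_nonzero(2)[of p] L R p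
      show ?thesis by (simp add: eq_divide_eq)
    next
      case 2
      then have L: "left_frac (node_at p) = (a, b)" and R: "right_frac (node_at p) = (c, d)"
        using node_frac_unique[OF sb_invariant_node_at, of p c a d b] p
        by (simp_all add: add.commute)
      have "mid_frac (node_at (p @ [False])) = (a + 2 * c, b + 2 * d)"
        using L R by (simp add: node_at_snoc mid_frac_def)
      with markov_laurent_descend(2)[of p] markov_laurent_node_at_nonzero(1)[of p] L R p
      show ?thesis by (simp add: eq_divide_eq)
    qed
  qed
qed

lemma markov_rules_markov_laurent: "markov_rules markov_laurent"
  unfolding markov_rules_def using markov_laurent_base markov_laurent_rule
  by (simp add: power2_eq_square)

lemma markov_rules_step:
  assumes "markov_rules M" "(a, b) \<in> markov_index" "(c, d) \<in> markov_index"
    "a * d = b * c + 1 \<or> b * c = a * d + 1" "a + 2 * c \<le> b + 2 * d"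
  shows "M (a + 2 * c, b + 2 * d) = ((M (c, d))\<^sup>2 + (M (a + c, b + d))\<^sup>2) / M (a, b)"
proof -
  have "int a * int d = int b * int c + 1 \<or> int b * int c = int a * int d + 1"
    using assms(4) by (metis of_nat_add of_nat_mult of_nat_1)
  then have "\<bar>int a * int d - int b * int c\<bar> = 1" by auto
  with assms show ?thesis unfolding markov_rules_def power2_eq_square by blast
qed

lemma markov_rules_agree_node_at:
  assumes M1: "markov_rules M1" and M2: "markov_rules M2"
  shows "M1 (left_frac (node_at p)) = M2 (left_frac (node_at p))
    \<and> M1 (right_frac (node_at p)) = M2 (right_frac (node_at p))
    \<and> M1 (mid_frac (node_at p)) = M2 (mid_frac (node_at p))"
proof (induction p rule: rev_induct)
  case Nil
  have base: "M1 (1, 0) = M2 (1, 0)" "M1 (0, 1) = M2 (0, 1)" "M1 (1, 1) = M2 (1, 1)"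
    using M1 M2 by (simp_all add: markov_rules_def)
  have "(1, 0) \<in> markov_index" "(0, 1) \<in> markov_index" by (simp_all add: markov_index_def)
  then have "M1 (1, 2) = M2 (1, 2)"
    using markov_rules_step[OF M1, of 1 0 0 1] markov_rules_step[OF M2, of 1 0 0 1] base
    by (simp add: numeral_2_eq_2)
  with base show ?case by (simp add: node_at_def sb_root_def mid_frac_def numeral_2_eq_2)
next
  case (snoc b p)
  obtain l1 l2 r1 r2
    where L: "left_frac (node_at p) = (l1, l2)" and R: "right_frac (node_at p) = (r1, r2)"
    by (metis prod.exhaust)
  have det: "r1 * l2 = l1 * r2 + 1" and le: "l1 \<le> l2" "r1 \<le> r2"
    using sb_invariant_node_at[of p] by (simp_all add: sb_invariant_def L R)
  have index: "(l1, l2) \<in> markov_index" "(r1, r2) \<in> markov_index"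
    using node_at_fracs_in_index[of p] by (simp_all add: L R)
  have IH: "M1 (l1, l2) = M2 (l1, l2)" "M1 (r1, r2) = M2 (r1, r2)"
    "M1 (l1 + r1, l2 + r2) = M2 (l1 + r1, l2 + r2)" "M1 (r1 + l1, r2 + l2) = M2 (r1 + l1, r2 + l2)"
    using snoc.IH by (simp_all add: L R mid_frac_def add.commute)
  have "M1 (mid_frac (node_at (p @ [b]))) = M2 (mid_frac (node_at (p @ [b])))"
  proof (cases b)
    case True
    have eq: "(l1 + (l1 + r1), l2 + (l2 + r2)) = (r1 + 2 * l1, r2 + 2 * l2)" by simp
    have step: "M (l1 + (l1 + r1), l2 + (l2 + r2))
        = ((M (l1, l2))\<^sup>2 + (M (r1 + l1, r2 + l2))\<^sup>2) / M (r1, r2)"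
      if "markov_rules M" for M
      unfolding eq using markov_rules_step[OF that index(2,1)] det le by (simp add: mult.commute)
    with True IH step[OF M1] step[OF M2] show ?thesis by (simp add: node_at_snoc mid_frac_def L R)
  next
    case False
    have eq: "(l1 + r1 + r1, l2 + r2 + r2) = (l1 + 2 * r1, l2 + 2 * r2)" by simp
    have step: "M (l1 + r1 + r1, l2 + r2 + r2)
        = ((M (r1, r2))\<^sup>2 + (M (l1 + r1, l2 + r2))\<^sup>2) / M (l1, l2)"
      if "markov_rules M" for M
      unfolding eq using markov_rules_step[OF that index] det le by (simp add: mult.commute)
    with False IH step[OF M1] step[OF M2] show ?thesis by (simp add: node_at_snoc mid_frac_def L R)
  qed
  with snoc.IH show ?case by (cases b) (simp_all add: node_at_snoc)
qed

lemma markov_eq_markov_laurent: "markov = markov_laurent"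
  unfolding markov_def
proof (rule the_equality)
  show "markov_rules markov_laurent \<and> (\<forall>\<rho>. \<rho> \<notin> markov_index \<longrightarrow> markov_laurent \<rho> = 0)"
    using markov_rules_markov_laurent by (simp add: markov_laurent_def)
next
  fix M assume M: "markov_rules M \<and> (\<forall>\<rho>. \<rho> \<notin> markov_index \<longrightarrow> M \<rho> = 0)"
  show "M = markov_laurent"
  proof
    fix \<rho> :: "nat \<times> nat"
    obtain e f where \<rho>: "\<rho> = (e, f)" by (metis prod.exhaust)
    consider "\<rho> \<notin> markov_index" | "\<rho> \<in> {(0, 1), (1, 0), (1, 1)}"
      | "\<rho> \<in> markov_index" "\<rho> \<notin> {(0, 1), (1, 0), (1, 1)}" by blast
    then show "M \<rho> = markov_laurent \<rho>"
    proof cases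
      case 1
      with M \<rho> show ?thesis by (simp add: markov_laurent_def)
    next
      case 2
      with M markov_rules_markov_laurent show ?thesis by (auto simp: markov_rules_def)
    next
      case 3
      then obtain p where "mid_frac (node_at p) = \<rho>"
        using markov_index_cases[of e f] exists_node_at \<rho> by blast
      with markov_rules_agree_node_at[of M markov_laurent p] M markov_rules_markov_laurent
      show ?thesis by simp
    qed
  qed
qed

lemma markovP_eq_numerator_at:
  assumes "1 \<le> a" "a \<le> b" "coprime a b"
  shows "markovP a b = numerator_at (a, b)"
proof -
  define D where "D = Xk ^ (a - 1) * Yk ^ (b - 1) * Zk ^ (a + b - 1)"
  have "D \<noteq> 0" using XYZ_nonzero by (simp add: D_def)
  have "xyz_monomial (a, b) = Xk * Yk * Zk * D"
    using assms(1,2) by (simp add: xyz_monomial_def D_def power_eq_if mult_ac)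
  then have markov: "markov (a, b) = eval_sq (numerator_at (a, b)) / D"
    using assms XYZ_nonzero \<open>D \<noteq> 0\<close>
    by (simp add: markov_eq_markov_laurent markov_laurent_def markov_index_def laurent_def)
  show ?thesis
    unfolding markovP_def D_def[symmetric] eval_sq_def[symmetric]
  proof (rule the_equality)
    fix q assume "markov (a, b) = eval_sq q / D"
    then have "eval_sq (q - numerator_at (a, b)) = 0"
      using markov \<open>D \<noteq> 0\<close> by (simp add: eval_sq_hom)
    then show "q = numerator_at (a, b)" by (simp add: eval_sq_eq_0_iff)
  qed (rule markov)
qed

lemma shaped_numerator_markovP:
  assumes "1 \<le> a" "a \<le> b" "coprime a b"
  shows "shaped_numerator (markovP a b) (a, b)"
proof (cases "(a, b) = (1, 1)")
  case True
  then show ?thesis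
    using markovP_eq_numerator_at[OF assms] by (simp add: numerator_at_def shaped_numerator_def)
next
  case False
  then have "(a, b) \<notin> {(0, 1), (1, 0), (1, 1)}" using assms(1,2) by auto
  then obtain p where p: "mid_frac (node_at p) = (a, b)"
    using markov_index_cases[of a b] exists_node_at assms by (force simp: markov_index_def)
  then show ?thesis
    using markovP_eq_numerator_at[OF assms] numerator_at_mid_frac[of p] sb_invariant_node_at[of p]
    by (simp add: sb_invariant_def)
qed

section \<open>Explicit coefficient formulas\<close>

lemma T0_shape_explicit:
  fixes x y :: "'a::idom"
  assumes "x + y \<noteq> 0" "T0_shape x y a b c" "1 \<le> a + b"
  shows "c = (x + y) ^ (a + b - 1)"
proof -
  obtain k where "a + b = Suc k" using assms(3) by (cases "a + b") auto
  with assms(1,2) show ?thesis by (simp add: T0_shape_def)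
qed

lemma R0_shape_explicit:
  fixes x y :: "'a::idom"
  assumes "x + y \<noteq> 0" "R0_shape x y a b c" "1 \<le> b"
  shows "c = x ^ a * (x + y) ^ (b - 1)"
proof -
  obtain k where "b = Suc k" using assms(3) by (cases b) auto
  with assms(1,2) show ?thesis by (simp add: R0_shape_def mult.left_commute)
qed

lemma S0_shape_explicit:
  fixes x y :: "'a::idom"
  assumes "x + y \<noteq> 0" "S0_shape x y a b c" "1 \<le> a"
  shows "c = x ^ b * (x + y) ^ (a - 1)"
proof -
  obtain k where "a = Suc k" using assms(3) by (cases a) auto
  with assms(1,2) show ?thesis by (simp add: S0_shape_def mult.left_commute)
qed

lemma T1_shape_explicit:
  fixes x y :: "'a::idom"
  assumes "x + y \<noteq> 0" "T1_shape x y a b c" "3 \<le> a + b"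
  shows "c = of_int (int a - 1) * (x + y) ^ (a + b - 2)
    + of_int (int b - int a) * x * (x + y) ^ (a + b - 3)"
proof -
  define t where "t = x + y"
  obtain k where k: "a + b = k + 3" using assms(3) by (metis add.commute le_add_diff_inverse)
  have "t ^ 3 * c = t ^ (k + 3) * ((of_nat a - 1) * t + (of_nat b - of_nat a) * x)"
    using assms(2) unfolding T1_shape_def T1_factor_def t_def[symmetric] k .
  also have "\<dots> = t ^ 3 * ((of_nat a - 1) * t ^ (k + 1) + (of_nat b - of_nat a) * x * t ^ k)"
    by (simp add: power_add algebra_simps)
  finally have "c = (of_nat a - 1) * t ^ (k + 1) + (of_nat b - of_nat a) * x * t ^ k"
    using assms(1) t_def by simp
  moreover have "a + b - 2 = k + 1" "a + b - 3 = k" using k by simp_all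
  ultimately show ?thesis unfolding t_def by simp
qed

lemma R1_shape_explicit:
  fixes x y :: "'a::idom"
  assumes "x + y \<noteq> 0" "R1_shape x y a b c" "3 \<le> b"
  shows "c = of_int (3 * int a - 1) * x ^ a * (x + y) ^ (b - 2)
    + of_int (int b - 2 * int a) * x ^ (a + 1) * (x + y) ^ (b - 3)"
proof -
  define t where "t = x + y"
  obtain k where k: "b = k + 3" using assms(3) by (metis add.commute le_add_diff_inverse)
  have "t ^ 3 * c = x ^ a * t ^ (k + 3) * ((3 * of_nat a - 1) * t + (of_nat b - 2 * of_nat a) * x)"
    using assms(2) unfolding R1_shape_def R1_factor_def t_def[symmetric] k .
  also have "\<dots> = t ^ 3 * ((3 * of_nat a - 1) * x ^ a * t ^ (k + 1)
      + (of_nat b - 2 * of_nat a) * x ^ (a + 1) * t ^ k)"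
    by (simp add: power_add algebra_simps)
  finally have "c = (3 * of_nat a - 1) * x ^ a * t ^ (k + 1)
      + (of_nat b - 2 * of_nat a) * x ^ (a + 1) * t ^ k"
    using assms(1) t_def by simp
  moreover have "b - 2 = k + 1" "b - 3 = k" using k by simp_all
  ultimately show ?thesis unfolding t_def by simp
qed

lemma even_T2_coefficients:
  fixes a b :: int
  shows "even ((a - 1) * (a - 2))" "even ((b - a)\<^sup>2 + 5 * a - 3 * b)"
proof -
  show "even ((a - 1) * (a - 2))" by (cases "even a") auto
  have e: "(b - a)\<^sup>2 + 5 * a - 3 * b = (b - a) * (b - a - 3) + 2 * a"
    by (simp add: algebra_simps power2_eq_square)
  have "even ((b - a) * (b - a - 3))" by (cases "even (b - a)") auto
  then show "even ((b - a)\<^sup>2 + 5 * a - 3 * b)" unfolding e by (intro dvd_add) simp_all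
qed

lemma T2_shape_explicit:
  fixes x y :: "'a::{idom, ring_char_0}"
  assumes "x + y \<noteq> 0" "T2_shape x y a b c" "5 \<le> a + b"
  shows "c = of_int ((int a - 1) * (int a - 2) div 2) * (x + y) ^ (a + b - 3)
    + of_int (int a * (int b - int a) - int a) * x * (x + y) ^ (a + b - 4)
    + of_int (((int b - int a)\<^sup>2 + 5 * int a - 3 * int b) div 2) * x\<^sup>2 * (x + y) ^ (a + b - 5)"
proof -
  define t where "t = x + y"
  obtain k where k: "a + b = k + 5" using assms(3) by (metis add.commute le_add_diff_inverse)
  define \<alpha> :: int where "\<alpha> = (int a - 1) * (int a - 2) div 2"
  define \<gamma> :: int where "\<gamma> = ((int b - int a)\<^sup>2 + 5 * int a - 3 * int b) div 2"
  have "2 * \<alpha> = (int a - 1) * (int a - 2)"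
    unfolding \<alpha>_def using even_T2_coefficients(1)[of "int a"] by simp
  from arg_cong[OF this, of "of_int :: int \<Rightarrow> 'a"]
  have \<alpha>2: "2 * (of_int \<alpha> :: 'a) = (of_nat a - 1) * (of_nat a - 2)" by simp
  have "2 * \<gamma> = (int b - int a)\<^sup>2 + 5 * int a - 3 * int b"
    unfolding \<gamma>_def using even_T2_coefficients(2)[of "int b" "int a"] by simp
  from arg_cong[OF this, of "of_int :: int \<Rightarrow> 'a"]
  have \<gamma>2: "2 * (of_int \<gamma> :: 'a) = (of_nat b - of_nat a)\<^sup>2 + 5 * of_nat a - 3 * of_nat b" by simp
  have F: "T2_factor x t a b = 2 * of_int \<alpha> * t\<^sup>2
      + 2 * of_int (int a * (int b - int a) - int a) * x * t + 2 * of_int \<gamma> * x\<^sup>2"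
    unfolding T2_factor_def \<alpha>2 \<gamma>2 by simp
  define R where "R = of_int \<alpha> * t ^ (k + 2)
    + of_int (int a * (int b - int a) - int a) * x * t ^ (k + 1) + of_int \<gamma> * x\<^sup>2 * t ^ k"
  have "t ^ 5 * (2 * c) = t ^ (k + 5) * T2_factor x t a b"
    using assms(2) unfolding T2_shape_def t_def[symmetric] k by (simp add: mult_ac)
  also have "\<dots> = t ^ 5 * (2 * R)"
    unfolding F R_def by (simp add: power_add algebra_simps eval_nat_numeral)
  finally have "c = R" using assms(1) t_def by simp
  moreover have "a + b - 3 = k + 2" "a + b - 4 = k + 1" "a + b - 5 = k" using k by simp_all
  ultimately show ?thesis unfolding R_def t_def \<alpha>_def \<gamma>_def by simp
qed

definition embed_uv :: "int poly poly \<Rightarrow> tri" where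
  "embed_uv q = [:q:]"

definition embed_uw :: "int poly poly \<Rightarrow> tri" where
  "embed_uw q = map_poly (\<lambda>r. [:r:]) q"

definition embed_vw :: "int poly poly \<Rightarrow> tri" where
  "embed_vw q = map_poly (map_poly (\<lambda>c. [:c:])) q"

lemma embed_uv_hom:
  "embed_uv (p + q) = embed_uv p + embed_uv q" "embed_uv (p * q) = embed_uv p * embed_uv q"
  "embed_uv (p ^ n) = embed_uv p ^ n" "embed_uv (of_int k) = of_int k"
  "embed_uv var_in = varU" "embed_uv var_out = varV"
  by (simp_all add: embed_uv_def const_poly_power of_int_poly var_in_def var_out_def
      varU_def varV_def)

lemma embed_uw_hom:
  "embed_uw (p + q) = embed_uw p + embed_uw q" "embed_uw (p * q) = embed_uw p * embed_uw q"
  "embed_uw (p ^ n) = embed_uw p ^ n" "embed_uw (of_int k) = of_int k"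
  "embed_uw var_in = varU" "embed_uw var_out = varW"
  unfolding embed_uw_def
  by (rule map_poly_add map_poly_mult map_poly_power; simp)+
     (simp_all add: of_int_poly var_in_def var_out_def varU_def varW_def map_poly_pCons one_pCons)

lemma const_poly_hom:
  "map_poly (\<lambda>c. [:c:]) (p + q) = map_poly (\<lambda>c. [:c:]) p + map_poly (\<lambda>c. [:c :: int:]) q"
  "map_poly (\<lambda>c. [:c:]) (p * q) = map_poly (\<lambda>c. [:c:]) p * map_poly (\<lambda>c. [:c :: int:]) q"
  by (rule map_poly_add map_poly_mult; simp add: mult.commute)+

lemma embed_vw_hom:
  "embed_vw (p + q) = embed_vw p + embed_vw q" "embed_vw (p * q) = embed_vw p * embed_vw q"
  "embed_vw (p ^ n) = embed_vw p ^ n"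
  "embed_vw var_in = varV" "embed_vw var_out = varW"
  unfolding embed_vw_def
  by (rule map_poly_add map_poly_mult map_poly_power; simp add: const_poly_hom)+
     (simp_all add: var_in_def var_out_def varV_def varW_def map_poly_pCons one_pCons)

lemma coeffW_embed: "coeffW P k = embed_uv (coeff P k)"
  by (simp add: coeffW_def embed_uv_def)

lemma coeffV_embed: "coeffV P k = embed_uw (coeff_v k P)"
  by (simp add: coeffV_def embed_uw_def coeff_v_def map_poly_map_poly o_def)

lemma coeffU_embed: "coeffU P 0 = embed_vw (at_u0 P)"
  by (simp add: coeffU_def embed_vw_def at_u0_def map_poly_map_poly o_def)

context
  fixes P :: tri and a b :: nat
  assumes shaped: "shaped_numerator P (a, b)"
begin

lemma coeffU_0_formula:
  assumes "1 \<le> a"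
  shows "coeffU P 0 = varV ^ b * (varV + varW) ^ (a - 1)"
  using S0_shape_explicit[OF var_sum_nonzero shaped_numerator_first_order(2)[OF shaped] assms] assms
  by (simp add: coeffU_embed embed_vw_hom)

lemma coeffV_0_formula:
  assumes "1 \<le> b"
  shows "coeffV P 0 = varU ^ a * (varU + varW) ^ (b - 1)"
  using R0_shape_explicit[OF var_sum_nonzero shaped_numerator_zeroth_order(2)[OF shaped] assms]
  by (simp add: coeffV_embed embed_uw_hom)

lemma coeffV_1_formula:
  assumes "3 \<le> b"
  shows "coeffV P 1 = of_int (3 * int a - 1) * varU ^ a * (varU + varW) ^ (b - 2)
    + of_int (int b - 2 * int a) * varU ^ (a + 1) * (varU + varW) ^ (b - 3)"
proof -
  have "R1_shape var_in var_out a b (coeff_v (Suc 0) P)"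
    using shaped assms by (auto simp: shaped_numerator_def all_shapes_def)
  from R1_shape_explicit[OF var_sum_nonzero this assms] show ?thesis
    unfolding coeffV_embed One_nat_def by (simp only: embed_uw_hom)
qed

lemma coeffW_0_formula:
  assumes "1 \<le> a + b"
  shows "coeffW P 0 = (varU + varV) ^ (a + b - 1)"
  using T0_shape_explicit[OF var_sum_nonzero shaped_numerator_zeroth_order(1)[OF shaped] assms]
  by (simp add: coeffW_embed embed_uv_hom)

lemma coeffW_1_formula:
  assumes "3 \<le> a + b"
  shows "coeffW P 1 = of_int (int a - 1) * (varU + varV) ^ (a + b - 2)
    + of_int (int b - int a) * varU * (varU + varV) ^ (a + b - 3)"
proof -
  have "T1_shape var_in var_out a b (coeff P (Suc 0))"
    using shaped assms by (auto simp: shaped_numerator_def all_shapes_def)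
  from T1_shape_explicit[OF var_sum_nonzero this assms] show ?thesis
    unfolding coeffW_embed One_nat_def by (simp only: embed_uv_hom)
qed

lemma coeffW_2_formula:
  assumes "5 \<le> a + b"
  shows "coeffW P 2 =
      of_int ((int a - 1) * (int a - 2) div 2) * (varU + varV) ^ (a + b - 3)
    + of_int (int a * (int b - int a) - int a) * varU * (varU + varV) ^ (a + b - 4)
    + of_int (((int b - int a)\<^sup>2 + 5 * int a - 3 * int b) div 2) * varU\<^sup>2
        * (varU + varV) ^ (a + b - 5)"
proof -
  have "T2_shape var_in var_out a b (coeff P 2)"
    using shaped assms by (auto simp: shaped_numerator_def all_shapes_def)
  from T2_shape_explicit[OF var_sum_nonzero this assms] show ?thesis
    unfolding coeffW_embed by (simp only: embed_uv_hom)
qed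

end

theorem theorem4p1:
  fixes a b :: nat
  assumes "1 \<le> a" and "a \<le> b" and "coprime a b"
  defines "P \<equiv> markovP a b"
  shows "coeffU P 0 = varV ^ b * (varV + varW) ^ (a - 1)
    \<and> coeffV P 0 = varU ^ a * (varU + varW) ^ (b - 1)
    \<and> (b \<ge> 3 \<longrightarrow> coeffV P 1 =
           of_int (3 * int a - 1) * varU ^ a * (varU + varW) ^ (b - 2)
         + of_int (int b - 2 * int a) * varU ^ (a + 1) * (varU + varW) ^ (b - 3))
    \<and> coeffW P 0 = (varU + varV) ^ (a + b - 1)
    \<and> (a + b \<ge> 3 \<longrightarrow> coeffW P 1 =
           of_int (int a - 1) * (varU + varV) ^ (a + b - 2)
         + of_int (int b - int a) * varU * (varU + varV) ^ (a + b - 3))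
    \<and> (a + b \<ge> 5 \<longrightarrow> coeffW P 2 =
           of_int ((int a - 1) * (int a - 2) div 2) * (varU + varV) ^ (a + b - 3)
         + of_int (int a * (int b - int a) - int a) * varU * (varU + varV) ^ (a + b - 4)
         + of_int (((int b - int a)^2 + 5 * int a - 3 * int b) div 2)
             * varU ^ 2 * (varU + varV) ^ (a + b - 5))"
proof -
  have shaped: "shaped_numerator P (a, b)"
    unfolding P_def using assms(1-3) by (rule shaped_numerator_markovP)
  show ?thesis
    using assms(1,2) coeffU_0_formula[OF shaped] coeffV_0_formula[OF shaped]
      coeffV_1_formula[OF shaped] coeffW_0_formula[OF shaped] coeffW_1_formula[OF shaped]
      coeffW_2_formula[OF shaped]
    by simp
qed

end
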